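(* For online Steiner Tree with $\Delta$-MRF arrivals, there are instances (with $\Delta\to\infty$) for which no online algorithm is better than $\Omega(\Delta)$-competitive.
   Context: Steiner Tree: a graph $G=(V,E)$ with a root $r\in V$ and edge costs; demands are vertices, and a feasible solution is a set of edges connecting every demand to $r$, with additive cost. Online: demands arrive one by one and after each arrival the algorithm irrevocably buys edges so that all demands so far are connected to $r$. $\Delta$-MRF arrivals: the sequence of $n$ demands $Y=(Y_1,\dots,Y_n)$ is drawn from a known distribution on $\Omega_1\times\dots\times\Omega_n$ of the form $\Pr[u]\propto\exp(\sum_i\psi_i(u_i)+\sum_{e\in E'}\psi_e((u_j)_{j\in e}))$ for a hypergraph $E'\subseteq2^{[n]}$ and potentials, whose weighted maximum degree $\max_i\max_u|\sum_{e\ni i}\psi_e((u_j)_{j\in e})|$ is $\Delta$. An algorithm is $\alpha$-competitive if $\mathbb{E}[\mathrm{ALG}(Y)]\le\alpha\,\mathbb{E}[\mathrm{OPT}(Y)]$. *)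

theory Defs
  imports Complex_Main
begin

text \<open>Vertices are natural numbers; an (undirected) edge is a 2-element vertex set.
  Demand i (0-indexed, i < st_n) takes values in st_Omega i.  The MRF has
  unary potentials st_psi1 i, a hypergraph st_H of subsets of indices, and
  hyperedge potentials st_psi e, which must depend only on coordinates in e.\<close>

record st_instance =
  st_V :: "nat set"
  st_root :: nat
  st_E :: "nat set set"
  st_cost :: "nat set \<Rightarrow> real"
  st_n :: nat
  st_Omega :: "nat \<Rightarrow> nat set"
  st_psi1 :: "nat \<Rightarrow> nat \<Rightarrow> real"
  st_H :: "nat set set"
  st_psi :: "nat set \<Rightarrow> nat list \<Rightarrow> real"

definition edge_rel :: "nat set set \<Rightarrow> (nat \<times> nat) set" where
  "edge_rel F = {(x, y). {x, y} \<in> F}"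

definition connects :: "nat set set \<Rightarrow> nat \<Rightarrow> nat set \<Rightarrow> bool" where
  "connects F r D \<longleftrightarrow> (\<forall>d\<in>D. (r, d) \<in> (edge_rel F)\<^sup>*)"

definition support :: "st_instance \<Rightarrow> nat list set" where
  "support I = {u. length u = st_n I \<and> (\<forall>i<st_n I. u ! i \<in> st_Omega I i)}"

definition instance_ok :: "st_instance \<Rightarrow> bool" where
  "instance_ok I \<longleftrightarrow>
     finite (st_V I) \<and> st_root I \<in> st_V I \<and>
     (\<forall>e\<in>st_E I. e \<subseteq> st_V I \<and> card e = 2) \<and>
     (\<forall>e\<in>st_E I. st_cost I e \<ge> 0) \<and>
     (\<forall>v\<in>st_V I. (st_root I, v) \<in> (edge_rel (st_E I))\<^sup>*) \<and>
     st_n I \<ge> 1 \<and>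
     (\<forall>i<st_n I. finite (st_Omega I i) \<and> st_Omega I i \<noteq> {} \<and> st_Omega I i \<subseteq> st_V I) \<and>
     (\<forall>e\<in>st_H I. e \<subseteq> {..<st_n I}) \<and>
     (\<forall>e\<in>st_H I. \<forall>u\<in>support I. \<forall>u'\<in>support I.
         (\<forall>j\<in>e. u ! j = u' ! j) \<longrightarrow> st_psi I e u = st_psi I e u')"

text \<open>Unnormalised MRF weight; Pr[u] = weight u / (sum of weights over the support).\<close>
definition weight :: "st_instance \<Rightarrow> nat list \<Rightarrow> real" where
  "weight I u = exp ((\<Sum>i<st_n I. st_psi1 I i (u ! i)) + (\<Sum>e\<in>st_H I. st_psi I e u))"

definition expect :: "st_instance \<Rightarrow> (nat list \<Rightarrow> real) \<Rightarrow> real" where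
  "expect I f = (\<Sum>u\<in>support I. weight I u * f u) / (\<Sum>u\<in>support I. weight I u)"

definition mrf_delta :: "st_instance \<Rightarrow> real" where
  "mrf_delta I = Max ((\<lambda>(i, u). \<bar>\<Sum>e\<in>{e\<in>st_H I. i \<in> e}. st_psi I e u\<bar>)
                       ` ({..<st_n I} \<times> support I))"

definition opt :: "st_instance \<Rightarrow> nat list \<Rightarrow> real" where
  "opt I ys = Min (sum (st_cost I) ` {F. F \<subseteq> st_E I \<and> connects F (st_root I) (set ys)})"

text \<open>A deterministic online algorithm A maps the prefix of demands seen so far
  to the set of edges it buys at that step; purchases are irrevocable, so the
  edges held after step t are the union of all purchases up to t.\<close>
definition alg_bought :: "(nat list \<Rightarrow> nat set set) \<Rightarrow> nat list \<Rightarrow> nat \<Rightarrow> nat set set" where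
  "alg_bought A ys t = (\<Union>s\<in>{1..t}. A (take s ys))"

definition online_alg :: "st_instance \<Rightarrow> (nat list \<Rightarrow> nat set set) \<Rightarrow> bool" where
  "online_alg I A \<longleftrightarrow> (\<forall>ys\<in>support I. \<forall>t\<in>{1..st_n I}.
      alg_bought A ys t \<subseteq> st_E I \<and> connects (alg_bought A ys t) (st_root I) (set (take t ys)))"

definition alg_cost :: "st_instance \<Rightarrow> (nat list \<Rightarrow> nat set set) \<Rightarrow> nat list \<Rightarrow> real" where
  "alg_cost I A ys = sum (st_cost I) (alg_bought A ys (st_n I))"

definition competitive :: "st_instance \<Rightarrow> (nat list \<Rightarrow> nat set set) \<Rightarrow> real \<Rightarrow> bool" where
  "competitive I A \<alpha> \<longleftrightarrow> expect I (alg_cost I A) \<le> \<alpha> * expect I (opt I)"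

end

theory Submission
  imports Defs "HOL-Library.Countable" "HOL-Library.Sublist"
begin

text \<open>The instance is a stochastic version of the classical lower bound for online Steiner
  tree on the unit interval. Tree nodes of depth \<open>< k\<close> are dyadic points, each present in many
  labelled copies, and unit-cost edges of length \<open>2 ^ -k\<close> join the copies of the deepest points
  to their in-order neighbours. One demand per tree node arrives in heap order, with a random
  label; an MRF with strength \<open>L\<close> rewards each label that extends the label of the parent node,
  so the maximum degree \<open>\<Delta>\<close> lies between \<open>L\<close> and \<open>3 L\<close>.

  If all labels are consistent, one copy of the hierarchical tree, of size \<open>2 ^ k\<close>, serves all
  demands; inconsistent configurations have mass at most \<open>2 ^ (2 k + 1) e ^ -L\<close> and cost at most
  \<open>4 ^ k\<close>. An online algorithm needs \<open>2 ^ (k - |h| - 1)\<close> edges around the demand of node \<open>h\<close>.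
  Edges bought before that demand arrives did not know the last bit of its label, so by the
  symmetry flipping that bit they are equally often wasted around the flipped label; along a
  consistent branch these wasted regions are disjoint. Summing over the \<open>k\<close> levels gives an
  expected online cost of order \<open>k 2 ^ k\<close>, and with \<open>L = 3 k + 1\<close> the ratio is \<open>\<Omega>(k) = \<Omega>(\<Delta>)\<close>.\<close>

section \<open>Points, vertices and neighbours\<close>

text \<open>A tree node \<open>h\<close> is read as the dyadic point \<open>pos h\<close> of \<open>(0, 1)\<close> in in-order position;
  vertices \<open>0\<close> (the root) and \<open>1\<close> are the endpoints of the interval, and every other vertex
  \<open>vert h c\<close> is a copy of the point \<open>h\<close> carrying a label \<open>c\<close>.\<close>

definition vert :: "bool list \<Rightarrow> bool list \<Rightarrow> nat" where
  "vert h c = to_nat (h, c) + 2"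

definition vert_of :: "nat \<Rightarrow> bool list \<times> bool list" where
  "vert_of v = from_nat (v - 2)"

lemma vert_of_vert [simp]: "vert_of (vert h c) = (h, c)"
  by (simp add: vert_def vert_of_def)

lemma vert_eq_iff [simp]: "vert h c = vert h' c' \<longleftrightarrow> h = h' \<and> c = c'"
  by (simp add: vert_def)

lemma vert_ne_01 [simp]: "vert h c \<noteq> 0" "vert h c \<noteq> 1" "vert h c \<noteq> Suc 0"
  "0 \<noteq> vert h c" "1 \<noteq> vert h c" "Suc 0 \<noteq> vert h c"
  by (auto simp: vert_def)

fun binfrac :: "bool list \<Rightarrow> real" where
  "binfrac [] = 0"
| "binfrac (x # xs) = (if x then 1/2 else 0) + binfrac xs / 2"

definition pos :: "bool list \<Rightarrow> real" where
  "pos h = binfrac h + (1/2) ^ (length h + 1)"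

definition vpos :: "nat \<Rightarrow> real" where
  "vpos v = (if v = 0 then 0 else if v = 1 then 1 else pos (fst (vert_of v)))"

lemma vpos_simps [simp]: "vpos 0 = 0" "vpos 1 = 1" "vpos (Suc 0) = 1" "vpos (vert h c) = pos h"
  by (auto simp: vpos_def)

definition before_last :: "bool \<Rightarrow> bool list \<Rightarrow> bool list" where
  "before_last b h = rev (tl (dropWhile (\<lambda>x. x \<noteq> b) (rev h)))"

lemma before_last_eq [simp]: "before_last b (h0 @ b # replicate m (\<not> b)) = h0"
  by (simp add: before_last_def dropWhile_append)

lemma replicate_if_notin: "b \<notin> set h \<Longrightarrow> h = replicate (length h) (\<not> b)"
  by (induction h) auto

lemma before_last_decomp:
  assumes "b \<in> set h"
  obtains m where "h = before_last b h @ b # replicate m (\<not> b)"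
proof -
  obtain ys zs where h: "h = ys @ b # zs" and "b \<notin> set zs"
    using split_list_last[OF assms] by blast
  then have "h = ys @ b # replicate (length zs) (\<not> b)"
    using replicate_if_notin[of b zs] by metis
  then show thesis
    by (intro that[of "length zs"]) simp
qed

lemma length_before_last: "b \<in> set h \<Longrightarrow> length (before_last b h) < length h"
proof -
  assume "b \<in> set h"
  then obtain m where "h = before_last b h @ b # replicate m (\<not> b)"
    by (rule before_last_decomp)
  then have "length h = length (before_last b h @ b # replicate m (\<not> b))"
    by (rule arg_cong)
  then show ?thesis by simp
qed

text \<open>\<open>nbr b h c\<close> is the nearest point to the left (if \<open>b\<close>) or to the right of \<open>h\<close> among its
  ancestors and the endpoints: the node before the last \<open>b\<close>-step on the path to \<open>h\<close>, carrying
  the corresponding prefix of the label.\<close>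

definition nbr :: "bool \<Rightarrow> bool list \<Rightarrow> bool list \<Rightarrow> nat" where
  "nbr b h c = (if b \<in> set h then vert (before_last b h) (take (length (before_last b h) + 1) c)
                else if b then 0 else 1)"

lemma nbr_cases:
  obtains "b \<notin> set h" "nbr b h c = (if b then 0 else 1)"
  | h0 m where "h = h0 @ b # replicate m (\<not> b)" "nbr b h c = vert h0 (take (length h0 + 1) c)"
proof (cases "b \<in> set h")
  case True
  then obtain m where "h = before_last b h @ b # replicate m (\<not> b)"
    by (rule before_last_decomp)
  with True that(2) show thesis by (simp add: nbr_def)
qed (simp add: nbr_def that(1))

lemma nbr_snoc_same: "length c = length h + 2 \<Longrightarrow> nbr b (h @ [b]) c = vert h (take (length h + 1) c)"
  by (simp add: nbr_def before_last_def)

lemma nbr_snoc_other: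
  assumes "prefix c c'" "length c = length h + 1"
  shows "nbr b (h @ [\<not> b]) c' = nbr b h c"
proof (cases "b \<in> set h")
  case True
  then have "take (length (before_last b h) + 1) c' = take (length (before_last b h) + 1) c"
    using length_before_last[OF True] assms by (auto simp: prefix_def)
  moreover have "before_last b (h @ [\<not> b]) = before_last b h"
    by (simp add: before_last_def)
  ultimately show ?thesis
    using True by (simp add: nbr_def)
qed (simp add: nbr_def)

definition sign_of :: "bool \<Rightarrow> real" where
  "sign_of b = (if b then 1 else -1)"

lemma binfrac_append: "binfrac (xs @ ys) = binfrac xs + binfrac ys * (1/2) ^ length xs"
  by (induction xs) (auto simp: field_simps)

lemma binfrac_replicate: "binfrac (replicate m b) = (if b then 1 - (1/2) ^ m else 0)"
  by (induction m) (auto simp: field_simps)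

lemma pos_turn:
  "pos (h0 @ b # replicate m (\<not> b)) = pos h0 + sign_of b * (1/2) ^ (length h0 + m + 2)"
  by (cases b) (simp_all add: pos_def binfrac_append binfrac_replicate sign_of_def power_add field_simps)

lemma pos_replicate: "pos (replicate m (\<not> b)) = (if b then (1/2)^(m+1) else 1 - (1/2)^(m+1))"
  by (cases b) (auto simp: pos_def binfrac_replicate field_simps)

lemma vpos_nbr: "vpos (vert h c) - vpos (nbr b h c) = sign_of b * (1/2) ^ (length h + 1)"
proof (cases rule: nbr_cases[of b h c])
  case 1
  then have "pos h = pos (replicate (length h) (\<not> b))"
    using arg_cong[OF replicate_if_notin, of b h pos] by simp
  then show ?thesis
    using 1 pos_replicate[of "length h" b] by (auto simp: sign_of_def)
next
  case (2 h0 m)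
  then show ?thesis using pos_turn[of h0 b m] by simp
qed

section \<open>The network\<close>

lemma finite_lists_length_eq_bool: "finite {xs :: bool list. length xs = n}"
  using finite_lists_length_eq[of "UNIV :: bool set" n] by simp

lemma card_lists_length_eq_bool: "card {xs :: bool list. length xs = n} = 2 ^ n"
  using card_lists_length_eq[of "UNIV :: bool set" n] by simp

text \<open>Every edge joins a vertex of depth \<open>k - 1\<close> to one of its two neighbours, so all edges
  have length \<open>2 ^ -k\<close> on the unit interval; the label \<open>c\<close> makes \<open>2 ^ k\<close> copies of each
  vertex of depth \<open>k - 1\<close>, and an edge to a neighbour of smaller depth keeps a prefix of it.\<close>

definition net_edges :: "nat \<Rightarrow> nat set set" where
  "net_edges k = {{vert h c, nbr b h c} | h c b. length h = k - 1 \<and> length c = k}"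

definition inside :: "bool list \<Rightarrow> bool list \<Rightarrow> nat \<Rightarrow> bool" where
  "inside h c v \<longleftrightarrow> (\<exists>h' c'. v = vert h' c' \<and> prefix h h' \<and> prefix c c')"

definition region_edges :: "nat \<Rightarrow> bool list \<Rightarrow> bool list \<Rightarrow> nat set set" where
  "region_edges k h c = {X \<in> net_edges k. \<exists>p\<in>X. inside h c p}"

lemma net_edges_image:
  "net_edges k = (\<lambda>(h, c, b). {vert h c, nbr b h c}) `
     ({h. length h = k - 1} \<times> {c. length c = k} \<times> UNIV)"
  unfolding net_edges_def by auto

lemma finite_net_edges: "finite (net_edges k)"
  unfolding net_edges_image
  by (intro finite_imageI finite_cartesian_product finite_lists_length_eq_bool) auto

lemma card_net_edges: "card (net_edges k) \<le> 2 ^ (k - 1) * 2 ^ k * 2"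
proof -
  have "card (net_edges k) \<le> card ({h :: bool list. length h = k - 1} \<times>
      {c :: bool list. length c = k} \<times> (UNIV :: bool set))"
    unfolding net_edges_image
    by (intro card_image_le finite_cartesian_product finite_lists_length_eq_bool) simp_all
  also have "\<dots> = 2 ^ (k - 1) * 2 ^ k * 2"
    by (simp add: card_cartesian_product card_lists_length_eq_bool)
  finally show ?thesis .
qed

lemma inside_vert_if_inside_nbr:
  assumes "inside h c (nbr b h1 c1)"
  shows "inside h c (vert h1 c1)"
proof (cases rule: nbr_cases[of b h1 c1])
  case 1
  then show ?thesis using assms by (auto simp: inside_def split: if_splits)
next
  case (2 h0 m)
  then have "prefix h h0" "prefix c (take (length h0 + 1) c1)"
    using assms by (auto simp: inside_def)
  moreover have "prefix h0 h1" "prefix (take (length h0 + 1) c1) c1"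
    using 2 by (simp_all add: take_is_prefix)
  ultimately have "prefix h h1" "prefix c c1"
    by (meson prefix_order.trans)+
  then show ?thesis
    by (auto simp: inside_def)
qed

lemma pos_prefix_turn:
  assumes "prefix h (h0 @ b # replicate m (\<not> b))" "length h0 < length h"
  shows "pos h = pos h0 + sign_of b * (1/2) ^ (length h + 1)"
proof -
  define m' where "m' = length h - length h0 - 1"
  obtain zs where "h0 @ b # replicate m (\<not> b) = h @ zs"
    using assms(1) by (auto simp: prefix_def)
  then have "h = take (length h) (h0 @ b # replicate m (\<not> b))"
    by simp
  also have "\<dots> = h0 @ b # replicate m' (\<not> b)"
    using assms prefix_length_le[OF assms(1)]
    by (simp add: m'_def take_append take_Cons' take_replicate)
  moreover have "length h0 + m' + 2 = length h + 1"
    using assms(2) by (simp add: m'_def)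
  ultimately show ?thesis
    using pos_turn[of h0 b m'] by simp
qed

lemma nbr_inside_or_far:
  assumes "inside h c (vert h1 c1)" and "length c = length h + 1"
  shows "inside h c (nbr b h1 c1) \<or> \<bar>vpos (nbr b h1 c1) - pos h\<bar> = (1/2) ^ (length h + 1)"
proof -
  have h: "prefix h h1" and c: "prefix c c1"
    using assms(1) by (auto simp: inside_def)
  show ?thesis
  proof (cases rule: nbr_cases[of b h1 c1])
    case 1
    then have "h = replicate (length h) (\<not> b)"
      using set_mono_prefix[OF h] replicate_if_notin by blast
    then have "pos h = pos (replicate (length h) (\<not> b))"
      by (rule arg_cong)
    then show ?thesis
      using 1 pos_replicate[of "length h" b] by auto
  next
    case (2 h0 m)
    show ?thesis
    proof (cases "length h \<le> length h0")
      case True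
      moreover have "prefix h0 h1"
        using 2 by simp
      ultimately have "prefix h h0"
        using h prefix_length_prefix by blast
      moreover have "prefix c (take (length h0 + 1) c1)"
        using c True assms(2) by (auto simp: prefix_def)
      ultimately show ?thesis
        using 2 by (auto simp: inside_def)
    next
      case False
      then have "pos h = pos h0 + sign_of b * (1/2) ^ (length h + 1)"
        using h 2 by (intro pos_prefix_turn[of h h0 b m]) simp_all
      then show ?thesis
        using 2 by (simp add: abs_mult sign_of_def)
    qed
  qed
qed

lemma net_edge_leaves_region:
  assumes "X \<in> net_edges k" "p \<in> X" "q \<in> X" "inside h c p" "length c = length h + 1"
  shows "inside h c q \<or> \<bar>vpos q - pos h\<bar> = (1/2) ^ (length h + 1)"
proof -
  obtain h1 c1 b where X: "X = {vert h1 c1, nbr b h1 c1}"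
    using assms(1) unfolding net_edges_def by blast
  have "inside h c (vert h1 c1)"
    using assms(2,4) X inside_vert_if_inside_nbr by auto
  then show ?thesis
    using nbr_inside_or_far[OF _ assms(5), of h1 c1 b] assms(3) X by auto
qed

lemma net_edge_length:
  assumes "X \<in> net_edges k" "p \<in> X" "q \<in> X" "k \<ge> 1"
  shows "\<bar>vpos p - vpos q\<bar> \<le> (1/2) ^ k"
proof -
  obtain h c b where X: "X = {vert h c, nbr b h c}" and "length h = k - 1"
    using assms(1) unfolding net_edges_def by blast
  then have "\<bar>vpos (vert h c) - vpos (nbr b h c)\<bar> = (1/2) ^ k"
    using vpos_nbr[of h c b] assms(4) by (simp add: abs_mult sign_of_def)
  then show ?thesis
    using assms(2,3) X by (auto simp: abs_minus_commute)
qed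

lemma region_edgeE:
  assumes "X \<in> region_edges k h c"
  obtains h' c' b where "X = {vert h' c', nbr b h' c'}" "length h' = k - 1"
    "prefix h h'" "prefix c c'"
proof -
  obtain h1 c1 b where X: "X = {vert h1 c1, nbr b h1 c1}" and "length h1 = k - 1"
    using assms unfolding region_edges_def net_edges_def by blast
  moreover have "inside h c (vert h1 c1)"
    using assms X inside_vert_if_inside_nbr unfolding region_edges_def by auto
  ultimately show thesis
    using that by (auto simp: inside_def)
qed

lemma region_edges_comparable:
  assumes "X \<in> region_edges k h1 c1" "X \<in> region_edges k h2 c2"
  shows "(prefix h1 h2 \<or> prefix h2 h1) \<and> (prefix c1 c2 \<or> prefix c2 c1)"
proof -
  obtain h' c' b where X: "X = {vert h' c', nbr b h' c'}" "length h' = k - 1"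
    "prefix h1 h'" "prefix c1 c'"
    using assms(1) by (rule region_edgeE)
  obtain h'' c'' b' where X': "X = {vert h'' c'', nbr b' h'' c''}" "length h'' = k - 1"
    "prefix h2 h''" "prefix c2 c''"
    using assms(2) by (rule region_edgeE)
  have "vert h' c' = vert h'' c''"
  proof (rule ccontr)
    assume "vert h' c' \<noteq> vert h'' c''"
    then have "vert h' c' = nbr b' h'' c''"
      using X X' by (auto simp: doubleton_eq_iff)
    then have "b' \<in> set h'' \<and> h' = before_last b' h''"
      by (auto simp: nbr_def split: if_splits)
    then show False
      using length_before_last X(2) X'(2) by fastforce
  qed
  then have "h' = h''" "c' = c''"
    by simp_all
  then show ?thesis
    using prefix_same_cases[OF X(3)] prefix_same_cases[OF X(4)] X'(3,4) by simp
qed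

section \<open>Cutting a region off the root\<close>

lemma edge_rel_sym: "(x, y) \<in> (edge_rel F)\<^sup>* \<Longrightarrow> (y, x) \<in> (edge_rel F)\<^sup>*"
proof -
  have "(edge_rel F)\<inverse> = edge_rel F"
    by (auto simp: edge_rel_def insert_commute)
  then show "(x, y) \<in> (edge_rel F)\<^sup>* \<Longrightarrow> (y, x) \<in> (edge_rel F)\<^sup>*"
    by (metis rtrancl_converseI)
qed

lemma edge_rel_mono: "F \<subseteq> G \<Longrightarrow> (x, y) \<in> (edge_rel F)\<^sup>* \<Longrightarrow> (x, y) \<in> (edge_rel G)\<^sup>*"
  by (erule rtrancl_mono[THEN subsetD, rotated]) (auto simp: edge_rel_def)

lemma edge_crossing:
  assumes "(a, v) \<in> (edge_rel F)\<^sup>*" "a \<notin> C" "v \<in> C"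
  shows "\<exists>x y. {x, y} \<in> F \<and> x \<in> C \<and> y \<notin> C"
  using assms
proof (induction rule: rtrancl_induct)
  case (step y z)
  show ?case
  proof (cases "y \<in> C")
    case False
    have "{z, y} \<in> F"
      using step(2) by (simp add: edge_rel_def insert_commute)
    then show ?thesis
      using False step(5) by blast
  qed (use step in blast)
qed simp

text \<open>If stepping along an edge changes \<open>f\<close> by at most \<open>\<delta>\<close>, and leaving \<open>P\<close> lands where
  \<open>f \<ge> D \<delta>\<close>, then a path from a point of \<open>P\<close> with \<open>f = 0\<close> to a point outside \<open>P\<close> uses \<open>D\<close>
  distinct edges touching \<open>P\<close>: for \<open>\<theta> = 1, \<dots>, D\<close> it must leave the set
  \<open>{x. P x \<and> f x < \<theta> \<delta>}\<close>, and it does so from a point with \<open>f\<close> in \<open>[(\<theta> - 1) \<delta>, \<theta> \<delta>)\<close>.\<close>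

lemma threshold_crossing_edge:
  fixes f :: "nat \<Rightarrow> real" and \<delta> :: real and D \<theta> :: nat
  assumes path: "(a, v) \<in> (edge_rel F)\<^sup>*"
    and "\<not> P a" "P v" "f v = 0" "\<delta> > 0"
    and short: "\<And>x y. {x, y} \<in> F \<Longrightarrow> \<bar>f x - f y\<bar> \<le> \<delta>"
    and far: "\<And>x y. {x, y} \<in> F \<Longrightarrow> P x \<Longrightarrow> \<not> P y \<Longrightarrow> D * \<delta> \<le> f y"
    and "\<theta> \<in> {1..D}"
  obtains x y where "{x, y} \<in> F" "P x" "real \<theta> * \<delta> - \<delta> \<le> f x" "f x < real \<theta> * \<delta>"
    "\<not> (P y \<and> f y < real \<theta> * \<delta>)"
proof -
  let ?C = "{x. P x \<and> f x < real \<theta> * \<delta>}"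
  have "a \<notin> ?C" "v \<in> ?C"
    using assms(2-5,8) by simp_all
  then obtain x y where xy: "{x, y} \<in> F" "x \<in> ?C" "y \<notin> ?C"
    using edge_crossing[OF path] by blast
  have "real \<theta> * \<delta> \<le> f y"
  proof (cases "P y")
    case False
    then have "D * \<delta> \<le> f y"
      using far xy by auto
    moreover have "real \<theta> * \<delta> \<le> D * \<delta>"
      using assms(5,8) by (auto intro: mult_right_mono)
    ultimately show ?thesis
      by linarith
  qed (use xy in auto)
  moreover have "\<bar>f x - f y\<bar> \<le> \<delta>"
    using short xy by auto
  ultimately show thesis
    using that[of x y] xy by auto
qed

lemma card_edges_touching_ge:
  fixes f :: "nat \<Rightarrow> real" and \<delta> :: real and D :: nat
  assumes path: "(a, v) \<in> (edge_rel F)\<^sup>*" and "finite F"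
    and "\<not> P a" "P v" "f v = 0" "\<delta> > 0"
    and short: "\<And>x y. {x, y} \<in> F \<Longrightarrow> \<bar>f x - f y\<bar> \<le> \<delta>"
    and far: "\<And>x y. {x, y} \<in> F \<Longrightarrow> P x \<Longrightarrow> \<not> P y \<Longrightarrow> D * \<delta> \<le> f y"
  shows "D \<le> card {X \<in> F. \<exists>x\<in>X. P x}"
proof -
  have "\<exists>x y. {x, y} \<in> F \<and> P x \<and> real \<theta> * \<delta> - \<delta> \<le> f x \<and> f x < real \<theta> * \<delta>
      \<and> \<not> (P y \<and> f y < real \<theta> * \<delta>)" if \<theta>: "\<theta> \<in> {1..D}" for \<theta>
  proof -
    obtain x y where "{x, y} \<in> F" "P x" "real \<theta> * \<delta> - \<delta> \<le> f x" "f x < real \<theta> * \<delta>"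
      "\<not> (P y \<and> f y < real \<theta> * \<delta>)"
      using path assms(3-6) short far \<theta> by (rule threshold_crossing_edge)
    then show ?thesis
      by blast
  qed
  then obtain x y where xy: "\<And>\<theta>. \<theta> \<in> {1..D} \<Longrightarrow> {x \<theta>, y \<theta>} \<in> F \<and> P (x \<theta>)
      \<and> real \<theta> * \<delta> - \<delta> \<le> f (x \<theta>) \<and> f (x \<theta>) < real \<theta> * \<delta> \<and> \<not> (P (y \<theta>) \<and> f (y \<theta>) < real \<theta> * \<delta>)"
    by metis
  have "inj_on (\<lambda>\<theta>. {x \<theta>, y \<theta>}) {1..D}"
  proof (rule linorder_inj_onI')
    fix \<theta>1 \<theta>2 assume \<theta>: "\<theta>1 \<in> {1..D}" "\<theta>2 \<in> {1..D}" "\<theta>1 < \<theta>2"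
    have "real \<theta>1 * \<delta> \<le> real \<theta>2 * \<delta> - \<delta>"
      using \<theta> \<open>\<delta> > 0\<close> mult_right_mono[of "real \<theta>1 + 1" "real \<theta>2" \<delta>] by (simp add: algebra_simps)
    then have "x \<theta>1 \<noteq> x \<theta>2" "x \<theta>1 \<noteq> y \<theta>2"
      using xy[OF \<theta>(1)] xy[OF \<theta>(2)] \<open>\<delta> > 0\<close> by auto
    then show "{x \<theta>1, y \<theta>1} \<noteq> {x \<theta>2, y \<theta>2}"
      by (auto simp: doubleton_eq_iff)
  qed
  moreover have "(\<lambda>\<theta>. {x \<theta>, y \<theta>}) ` {1..D} \<subseteq> {X \<in> F. \<exists>x\<in>X. P x}"
    using xy by auto
  ultimately have "card {1..D} \<le> card {X \<in> F. \<exists>x\<in>X. P x}"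
    using \<open>finite F\<close> by (intro card_inj_on_le) auto
  then show ?thesis
    by simp
qed

lemma card_region_edges_ge:
  assumes F: "F \<subseteq> net_edges k" and conn: "(0, vert h c) \<in> (edge_rel F)\<^sup>*"
    and "length h < k" and c: "length c = length h + 1"
  shows "2 ^ (k - length h - 1) \<le> card (F \<inter> region_edges k h c)"
proof -
  define D :: nat where "D = 2 ^ (k - length h - 1)"
  have scale: "(1/2) ^ (length h + 1) = real D * (1/2) ^ k"
  proof -
    have "k = (k - length h - 1) + (length h + 1)"
      using \<open>length h < k\<close> by simp
    then have "(1/2::real) ^ k = (1/2) ^ (k - length h - 1) * (1/2) ^ (length h + 1)"
      by (metis power_add)
    then show ?thesis by (simp add: D_def power_one_over)
  qed
  have "D \<le> card {X \<in> F. \<exists>x\<in>X. inside h c x}"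
  proof (rule card_edges_touching_ge[OF conn, where f = "\<lambda>p. \<bar>vpos p - pos h\<bar>" and \<delta> = "(1/2) ^ k"])
    show "finite F"
      using F finite_net_edges by (rule finite_subset)
    show "\<not> inside h c 0" "inside h c (vert h c)"
      by (auto simp: inside_def)
  next
    fix x y assume "{x, y} \<in> F"
    then have "\<bar>vpos x - vpos y\<bar> \<le> (1/2) ^ k"
      using F \<open>length h < k\<close> by (intro net_edge_length[of "{x, y}"]) auto
    then show "\<bar>\<bar>vpos x - pos h\<bar> - \<bar>vpos y - pos h\<bar>\<bar> \<le> (1/2) ^ k"
      using abs_triangle_ineq3[of "vpos x - pos h" "vpos y - pos h"] by simp
  next
    fix x y assume "{x, y} \<in> F" "inside h c x" "\<not> inside h c y"
    then show "real D * (1/2) ^ k \<le> \<bar>vpos y - pos h\<bar>"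
      using F net_edge_leaves_region[OF _ _ _ _ c, of "{x, y}" k x y] scale by auto
  qed simp_all
  also have "{X \<in> F. \<exists>x\<in>X. inside h c x} = F \<inter> region_edges k h c"
    using F by (auto simp: region_edges_def)
  finally show ?thesis by (simp add: D_def)
qed

section \<open>Label trees\<close>

text \<open>A labelling of the tree nodes that is monotone along tree edges selects one copy of the
  classical hierarchical tree.\<close>

definition label_chain :: "nat \<Rightarrow> (bool list \<Rightarrow> bool list) \<Rightarrow> bool" where
  "label_chain k lab \<longleftrightarrow> (\<forall>h. length h < k \<longrightarrow> length (lab h) = length h + 1) \<and>
     (\<forall>h b. length h + 1 < k \<longrightarrow> prefix (lab h) (lab (h @ [b])))"

definition label_tree :: "nat \<Rightarrow> (bool list \<Rightarrow> bool list) \<Rightarrow> nat set set" where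
  "label_tree k lab = {{vert h (lab h), nbr b h (lab h)} | h b. length h = k - 1}"

lemma label_tree_subset:
  assumes "label_chain k lab" "k \<ge> 1"
  shows "label_tree k lab \<subseteq> net_edges k"
proof
  fix X assume "X \<in> label_tree k lab"
  then obtain h b where "X = {vert h (lab h), nbr b h (lab h)}" "length h = k - 1"
    unfolding label_tree_def by blast
  moreover have "length (lab h) = k"
    using assms calculation(2) unfolding label_chain_def by auto
  ultimately show "X \<in> net_edges k"
    unfolding net_edges_def by blast
qed

lemma card_label_tree: "k \<ge> 1 \<Longrightarrow> card (label_tree k lab) \<le> 2 ^ k"
proof -
  assume "k \<ge> 1"
  let ?S = "{h :: bool list. length h = k - 1} \<times> (UNIV :: bool set)"
  have "label_tree k lab = (\<lambda>(h, b). {vert h (lab h), nbr b h (lab h)}) ` ?S"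
    unfolding label_tree_def by auto
  moreover have "finite ?S"
    by (simp add: finite_lists_length_eq_bool)
  ultimately have "card (label_tree k lab) \<le> card ?S"
    by (simp add: card_image_le)
  also have "card ?S = 2 ^ (k - 1) * 2"
    by (simp add: card_cartesian_product card_lists_length_eq_bool)
  also have "\<dots> = 2 ^ k"
    using \<open>k \<ge> 1\<close> by (cases k) auto
  finally show ?thesis .
qed

lemma label_chainD:
  assumes "label_chain k lab" "length (h @ [b]) < k"
  shows "length (lab h) = length h + 1" "length (lab (h @ [b])) = length h + 2"
    "prefix (lab h) (lab (h @ [b]))" "take (length h + 1) (lab (h @ [b])) = lab h"
proof -
  show l: "length (lab h) = length h + 1" "length (lab (h @ [b])) = length h + 2"
    and p: "prefix (lab h) (lab (h @ [b]))"
    using assms unfolding label_chain_def by auto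
  then show "take (length h + 1) (lab (h @ [b])) = lab h"
    by (auto simp: prefix_def)
qed

lemma label_tree_reaches_nbr:
  assumes lab: "label_chain k lab" and "length h < k"
  shows "(vert h (lab h), nbr b h (lab h)) \<in> (edge_rel (label_tree k lab))\<^sup>*"
  using \<open>length h < k\<close>
proof (induction "k - 1 - length h" arbitrary: h b)
  case 0
  then have "{vert h (lab h), nbr b h (lab h)} \<in> label_tree k lab"
    unfolding label_tree_def by fastforce
  then show ?case
    by (auto simp: edge_rel_def)
next
  case (Suc d)
  let ?g = "h @ [\<not> b]"
  have g: "length ?g < k" "d = k - 1 - length ?g"
    using Suc by auto
  note facts = label_chainD[OF lab g(1)]
  have "nbr b ?g (lab ?g) = nbr b h (lab h)"
    using nbr_snoc_other[OF facts(3,1)] .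
  moreover have "nbr (\<not> b) ?g (lab ?g) = vert h (lab h)"
    using nbr_snoc_same[OF facts(2), of "\<not> b"] facts(4) by simp
  ultimately have "(vert ?g (lab ?g), nbr b h (lab h)) \<in> (edge_rel (label_tree k lab))\<^sup>*"
    and "(vert h (lab h), vert ?g (lab ?g)) \<in> (edge_rel (label_tree k lab))\<^sup>*"
    using Suc(1)[OF g(2,1), of b] edge_rel_sym[OF Suc(1)[OF g(2,1), of "\<not> b"]] by simp_all
  then show ?case
    by (rule rtrancl_trans[rotated])
qed

lemma label_tree_root:
  assumes lab: "label_chain k lab" and "k \<ge> 1"
  shows "(0, vert [] (lab [])) \<in> (edge_rel (label_tree k lab))\<^sup>*"
    and "(0, 1) \<in> (edge_rel (label_tree k lab))\<^sup>*"
proof -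
  have nbr_Nil: "nbr True [] c = 0" "nbr False [] c = 1" for c
    by (auto simp: nbr_def)
  show root: "(0, vert [] (lab [])) \<in> (edge_rel (label_tree k lab))\<^sup>*"
    using edge_rel_sym[OF label_tree_reaches_nbr[OF lab, of "[]" True]] \<open>k \<ge> 1\<close>
    by (simp add: nbr_Nil)
  moreover have "(vert [] (lab []), 1) \<in> (edge_rel (label_tree k lab))\<^sup>*"
    using label_tree_reaches_nbr[OF lab, of "[]" False] \<open>k \<ge> 1\<close> by (simp add: nbr_Nil)
  ultimately show "(0, 1) \<in> (edge_rel (label_tree k lab))\<^sup>*"
    by (rule rtrancl_trans)
qed

lemma label_tree_connected:
  assumes lab: "label_chain k lab" and "length h < k"
  shows "(0, vert h (lab h)) \<in> (edge_rel (label_tree k lab))\<^sup>*"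
    and "(0, nbr b h (lab h)) \<in> (edge_rel (label_tree k lab))\<^sup>*"
proof -
  let ?R = "(edge_rel (label_tree k lab))\<^sup>*"
  have "(0, vert h (lab h)) \<in> ?R \<and> (\<forall>b. (0, nbr b h (lab h)) \<in> ?R)"
    using \<open>length h < k\<close>
  proof (induction h rule: rev_induct)
    case Nil
    then show ?case
      using label_tree_root[OF lab] by (auto simp: nbr_def)
  next
    case (snoc x h)
    then have IH: "(0, vert h (lab h)) \<in> ?R" "\<And>b. (0, nbr b h (lab h)) \<in> ?R"
      by auto
    note facts = label_chainD[OF lab snoc(2)]
    have nbrs: "(0, nbr b (h @ [x]) (lab (h @ [x]))) \<in> ?R" for b
    proof (cases "x = b")
      case True
      then show ?thesis using nbr_snoc_same[OF facts(2), of b] facts(4) IH(1) by simp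
    next
      case False
      then have "x = (\<not> b)" by auto
      then show ?thesis using nbr_snoc_other[OF facts(3,1), of b] IH(2) by simp
    qed
    moreover have "(0, vert (h @ [x]) (lab (h @ [x]))) \<in> ?R"
      using nbrs[of True] edge_rel_sym[OF label_tree_reaches_nbr[OF lab snoc(2), of True]]
      by (rule rtrancl_trans)
    ultimately show ?case by blast
  qed
  then show "(0, vert h (lab h)) \<in> ?R" and "(0, nbr b h (lab h)) \<in> ?R"
    by blast+
qed

section \<open>The instance\<close>

text \<open>Demands are indexed by the tree nodes in heap order (root \<open>1\<close>, children of \<open>i\<close> at \<open>2 i\<close>
  and \<open>2 i + 1\<close>), so every node arrives after its ancestors; demand \<open>0\<close> is always vertex \<open>1\<close>.\<close>

definition heap_idx :: "bool list \<Rightarrow> nat" where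
  "heap_idx h = foldl (\<lambda>a b. 2 * a + (if b then 1 else 0)) 1 h"

fun heap_node :: "nat \<Rightarrow> bool list" where
  "heap_node i = (if i \<le> 1 then [] else heap_node (i div 2) @ [odd i])"

declare heap_node.simps [simp del]

lemma heap_idx_Nil [simp]: "heap_idx [] = 1"
  by (simp add: heap_idx_def)

lemma heap_idx_snoc: "heap_idx (h @ [b]) = 2 * heap_idx h + (if b then 1 else 0)"
  by (simp add: heap_idx_def)

lemma heap_idx_bounds: "2 ^ length h \<le> heap_idx h \<and> heap_idx h < 2 ^ (length h + 1)"
  by (induction h rule: rev_induct) (auto simp: heap_idx_snoc)

lemma heap_idx_ge1: "heap_idx h \<ge> 1"
  using heap_idx_bounds[of h] by (meson le_trans one_le_numeral one_le_power)

lemma heap_idx_less: "length h < k \<Longrightarrow> heap_idx h < 2 ^ k"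
  using heap_idx_bounds[of h] power_increasing[of "length h + 1" k "2::nat"] by simp

lemma heap_idx_heap_node: "i \<ge> 1 \<Longrightarrow> heap_idx (heap_node i) = i"
proof (induction i rule: heap_node.induct)
  case (1 i)
  show ?case
  proof (cases "i \<le> 1")
    case False
    with 1 have "heap_idx (heap_node (i div 2)) = i div 2"
      by simp
    with False show ?thesis
      by (subst heap_node.simps) (simp add: heap_idx_snoc)
  qed (use 1 in \<open>simp add: heap_node.simps\<close>)
qed

lemma heap_node_heap_idx [simp]: "heap_node (heap_idx h) = h"
proof (induction h rule: rev_induct)
  case (snoc b h)
  have "(2 * heap_idx h + (if b then 1 else 0)) div 2 = heap_idx h"
    "odd (2 * heap_idx h + (if b then 1 else 0)) = b"
    by auto
  then show ?case
    using snoc heap_idx_ge1[of h] by (subst heap_node.simps) (auto simp: heap_idx_snoc)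
qed (simp add: heap_node.simps)

lemma heap_idx_inj [simp]: "heap_idx h = heap_idx h' \<longleftrightarrow> h = h'"
  by (metis heap_node_heap_idx)

lemma length_heap_node_less: "1 \<le> i \<Longrightarrow> i < 2 ^ k \<Longrightarrow> length (heap_node i) < k"
proof -
  assume "1 \<le> i" "i < 2 ^ k"
  have "2 ^ length (heap_node i) \<le> i"
    using heap_idx_bounds[of "heap_node i"] heap_idx_heap_node[OF \<open>1 \<le> i\<close>] by simp
  then have "(2::nat) ^ length (heap_node i) < 2 ^ k"
    using \<open>i < 2 ^ k\<close> by (rule le_less_trans)
  then show ?thesis
    by (simp add: power_strict_increasing_iff)
qed

lemma heap_idx_mono: "prefix h g \<Longrightarrow> heap_idx h \<le> heap_idx g"
proof -
  have "heap_idx h \<le> heap_idx (h @ zs)" for zs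
    by (induction zs rule: rev_induct) (auto simp: heap_idx_snoc simp flip: append_assoc)
  then show "prefix h g \<Longrightarrow> heap_idx h \<le> heap_idx g"
    by (auto simp: prefix_def)
qed

lemma heap_idx_parent_less: "heap_idx h < heap_idx (h @ [b])"
  using heap_idx_ge1[of h] by (simp add: heap_idx_snoc)

lemma finite_lists_shorter_bool: "finite {g :: bool list. length g < m}"
  using finite_lists_length_le[of "UNIV :: bool set" m] by (rule rev_finite_subset) auto

lemma card_lists_shorter_bool: "card {g :: bool list. length g < m} \<le> 2 ^ m"
proof -
  have "card {g :: bool list. length g < m} \<le> card {..<(2::nat) ^ m}"
    using heap_idx_less by (intro card_inj_on_le[of heap_idx]) (auto intro: inj_onI)
  then show ?thesis
    by simp
qed

lemma finite_card_parent_child_pairs: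
  "finite ({g :: bool list. length g + 1 < k} \<times> (UNIV :: bool set))"
  "card ({g :: bool list. length g + 1 < k} \<times> (UNIV :: bool set)) \<le> 2 ^ (k + 1)"
proof -
  have "finite {g :: bool list. length g + 1 < k}"
    by (rule finite_subset[OF _ finite_lists_shorter_bool[of k]]) auto
  then show "finite ({g :: bool list. length g + 1 < k} \<times> (UNIV :: bool set))"
    by simp
  have "card {g :: bool list. length g + 1 < k} \<le> card {g :: bool list. length g < k}"
    by (intro card_mono finite_lists_shorter_bool) auto
  also have "\<dots> \<le> 2 ^ k"
    by (rule card_lists_shorter_bool)
  finally show "card ({g :: bool list. length g + 1 < k} \<times> (UNIV :: bool set)) \<le> 2 ^ (k + 1)"
    by (simp add: card_cartesian_product)
qed

definition net_verts :: "nat \<Rightarrow> nat set" where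
  "net_verts k = {0, 1} \<union> {vert h c | h c. length h < k \<and> length c = length h + 1}"

definition demand_vals :: "nat \<Rightarrow> nat set" where
  "demand_vals i = (if i = 0 then {1} else {vert (heap_node i) c | c. length c = length (heap_node i) + 1})"

definition tree_pairs :: "nat \<Rightarrow> nat set set" where
  "tree_pairs k = {{heap_idx h, heap_idx (h @ [b])} | h b. length h + 1 < k}"

text \<open>The potential of a tree edge \<open>{i, j}\<close>, \<open>i < j\<close>, rewards the label of demand \<open>j\<close> extending
  that of its parent \<open>i\<close>.\<close>

definition label_pot :: "real \<Rightarrow> nat set \<Rightarrow> nat list \<Rightarrow> real" where
  "label_pot L e u = (if prefix (snd (vert_of (u ! Min e))) (snd (vert_of (u ! Max e))) then L else 0)"

definition hard_inst :: "nat \<Rightarrow> real \<Rightarrow> st_instance" where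
  "hard_inst k L = \<lparr>st_V = net_verts k, st_root = 0, st_E = net_edges k, st_cost = (\<lambda>_. 1),
     st_n = 2 ^ k, st_Omega = demand_vals, st_psi1 = (\<lambda>_ _. 0), st_H = tree_pairs k,
     st_psi = label_pot L\<rparr>"

lemma hard_inst_simps [simp]:
  "st_V (hard_inst k L) = net_verts k" "st_root (hard_inst k L) = 0"
  "st_E (hard_inst k L) = net_edges k" "st_cost (hard_inst k L) = (\<lambda>_. 1)"
  "st_n (hard_inst k L) = 2 ^ k" "st_Omega (hard_inst k L) = demand_vals"
  "st_psi1 (hard_inst k L) = (\<lambda>_ _. 0)" "st_H (hard_inst k L) = tree_pairs k"
  "st_psi (hard_inst k L) = label_pot L"
  by (simp_all add: hard_inst_def)

lemma tree_pair_Min_Max: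
  "Min {heap_idx h, heap_idx (h @ [b])} = heap_idx h"
  "Max {heap_idx h, heap_idx (h @ [b])} = heap_idx (h @ [b])"
  using heap_idx_parent_less[of h b] by auto

lemma label_pot_tree_pair:
  "label_pot L {heap_idx g, heap_idx (g @ [x])} u =
     (if prefix (snd (vert_of (u ! heap_idx g))) (snd (vert_of (u ! heap_idx (g @ [x])))) then L else 0)"
  by (simp add: label_pot_def tree_pair_Min_Max)

lemma finite_net_verts: "finite (net_verts k)"
proof -
  have "{vert h c | h c. length h < k \<and> length c = length h + 1} \<subseteq>
      (\<lambda>(h, c). vert h c) ` ({h. length h \<le> k} \<times> {c. length c \<le> k + 1})"
    by auto
  moreover have "finite ({h :: bool list. length h \<le> k} \<times> {c :: bool list. length c \<le> k + 1})"
    using finite_lists_length_le[of "UNIV :: bool set"] by simp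
  ultimately have "finite {vert h c | h c. length h < k \<and> length c = length h + 1}"
    by (rule finite_subset[OF _ finite_imageI])
  then show ?thesis
    by (simp add: net_verts_def)
qed

lemma net_edge_in_net_verts:
  assumes "e \<in> net_edges k" "k \<ge> 1"
  shows "e \<subseteq> net_verts k" "card e = 2"
proof -
  obtain h c b where e: "e = {vert h c, nbr b h c}" "length h = k - 1" "length c = k"
    using assms(1) unfolding net_edges_def by blast
  have "nbr b h c \<in> net_verts k \<and> nbr b h c \<noteq> vert h c"
  proof (cases "b \<in> set h")
    case True
    with length_before_last[OF True] e assms(2) show ?thesis
      unfolding net_verts_def nbr_def by auto
  qed (auto simp: net_verts_def nbr_def)
  moreover have "vert h c \<in> net_verts k"
    using e assms(2) unfolding net_verts_def by auto
  ultimately show "e \<subseteq> net_verts k" "card e = 2"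
    using e by auto
qed

lemma prefix_take_take: "n \<le> m \<Longrightarrow> prefix (take n xs) (take m xs)"
  by (metis min.absorb1 take_is_prefix take_take)

lemma net_verts_connected:
  assumes "k \<ge> 1" "v \<in> net_verts k"
  shows "(0, v) \<in> (edge_rel (net_edges k))\<^sup>*"
proof -
  define lab where "lab c g = take (length g + 1) (c @ replicate k False)" for c g :: "bool list"
  have chain: "label_chain k (lab c)" if "length c \<le> k" for c
    using that unfolding label_chain_def lab_def by (intro conjI allI impI prefix_take_take) auto
  have reach: "(0, v) \<in> (edge_rel (net_edges k))\<^sup>*"
    if "(0, v) \<in> (edge_rel (label_tree k (lab c)))\<^sup>*" "length c \<le> k" for c v
    using edge_rel_mono[OF label_tree_subset[OF chain[OF that(2)] assms(1)] that(1)] .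
  consider "v = 0" | "v = 1" | h c where "v = vert h c" "length h < k" "length c = length h + 1"
    using assms(2) unfolding net_verts_def by blast
  then show ?thesis
  proof cases
    case 2
    have "(0, nbr False [] (lab [] [])) \<in> (edge_rel (label_tree k (lab [])))\<^sup>*"
      using label_tree_connected(2)[OF chain] assms(1) by simp
    then show ?thesis
      using 2 reach[where c = "[]"] by (simp add: nbr_def)
  next
    case (3 h c)
    then have "lab c h = c"
      by (simp add: lab_def)
    then show ?thesis
      using 3 label_tree_connected(1)[OF chain, of c h] reach[where c = c] by simp
  qed simp
qed

lemma demand_vals_props:
  assumes "i < 2 ^ k"
  shows "finite (demand_vals i)" "demand_vals i \<noteq> {}" "demand_vals i \<subseteq> net_verts k"
proof -
  show "finite (demand_vals i)"
  proof (cases "i = 0")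
    case False
    then have "demand_vals i = vert (heap_node i) ` {c. length c = length (heap_node i) + 1}"
      unfolding demand_vals_def by auto
    then show ?thesis
      by (simp add: finite_lists_length_eq_bool)
  qed (simp add: demand_vals_def)
  show "demand_vals i \<noteq> {}"
    unfolding demand_vals_def by (auto intro!: exI[of _ "replicate (Suc (length (heap_node i))) False"])
  show "demand_vals i \<subseteq> net_verts k"
    using length_heap_node_less[OF _ assms] unfolding demand_vals_def net_verts_def by auto
qed

lemma tree_pairs_subset: "e \<in> tree_pairs k \<Longrightarrow> e \<subseteq> {..<2 ^ k}"
  unfolding tree_pairs_def using heap_idx_less[of "_ @ [_]" k] heap_idx_less[of _ k] by fastforce

lemma finite_tree_pairs: "finite (tree_pairs k)"
proof -
  have "tree_pairs k \<subseteq> (\<lambda>(h, b). {heap_idx h, heap_idx (h @ [b])}) ` ({h. length h \<le> k} \<times> UNIV)"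
    unfolding tree_pairs_def by auto
  then show ?thesis
    using finite_lists_length_le[of "UNIV :: bool set" k] by (auto intro: finite_subset)
qed

lemma tree_pairs_containing:
  assumes "e \<in> tree_pairs k" "i \<in> e"
  shows "e \<in> {{i div 2, i}, {i, 2 * i}, {i, 2 * i + 1}}"
proof -
  obtain g x where e: "e = {heap_idx g, heap_idx (g @ [x])}"
    using assms(1) unfolding tree_pairs_def by blast
  then have "i = heap_idx g \<or> i = 2 * heap_idx g + (if x then 1 else 0)"
    using assms(2) by (auto simp: heap_idx_snoc)
  then show ?thesis
    using e by (cases x) (auto simp: heap_idx_snoc)
qed

lemma label_pot_local:
  assumes "e \<in> tree_pairs k" "\<forall>j\<in>e. u ! j = u' ! j"
  shows "label_pot L e u = label_pot L e u'"
proof -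
  obtain h b where "e = {heap_idx h, heap_idx (h @ [b])}"
    using assms(1) unfolding tree_pairs_def by blast
  then have "Min e \<in> e" "Max e \<in> e"
    by (simp_all add: tree_pair_Min_Max)
  then show ?thesis
    using assms(2) by (simp add: label_pot_def)
qed

lemma hard_inst_ok: "k \<ge> 1 \<Longrightarrow> instance_ok (hard_inst k L)"
  unfolding instance_ok_def hard_inst_simps
  using finite_net_verts net_edge_in_net_verts net_verts_connected demand_vals_props
    tree_pairs_subset label_pot_local
  by (auto simp: net_verts_def)

section \<open>Relabelling subtrees\<close>

lemma prefix_iff_take: "prefix a c \<longleftrightarrow> length a \<le> length c \<and> take (length a) c = a"
  by (auto simp: prefix_def) (metis append_take_drop_id)

definition swap_prefix :: "'a list \<Rightarrow> 'a list \<Rightarrow> 'a list \<Rightarrow> 'a list" where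
  "swap_prefix a b c = (if prefix a c then b @ drop (length a) c
                        else if prefix b c then a @ drop (length b) c else c)"

lemma length_swap_prefix: "length a = length b \<Longrightarrow> length (swap_prefix a b c) = length c"
  by (auto simp: swap_prefix_def dest: prefix_length_le)

lemma swap_prefix_swap_prefix:
  assumes l: "length a = length b"
  shows "swap_prefix b a (swap_prefix a b c) = c"
proof (cases "prefix a c")
  case True
  then show ?thesis
    using l by (auto simp: swap_prefix_def prefix_def)
next
  case na: False
  show ?thesis
  proof (cases "prefix b c")
    case True
    have "\<not> prefix b (a @ drop (length b) c)"
    proof
      assume "prefix b (a @ drop (length b) c)"
      then have "take (length b) (a @ drop (length b) c) = b"
        by (simp add: prefix_iff_take)
      then have "b = a"
        using l by simp
      with na True show False
        by simp
    qed
    then show ?thesis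
      using na True l by (auto simp: swap_prefix_def prefix_def)
  next
    case False
    then show ?thesis
      using na by (simp add: swap_prefix_def)
  qed
qed

lemma swap_prefix_mono:
  assumes l: "length a = length b" and la: "length a \<le> length c1" and p: "prefix c1 c2"
  shows "prefix (swap_prefix a b c1) (swap_prefix a b c2)"
proof -
  have t: "take (length a) c2 = take (length a) c1"
    using p la by (auto simp: prefix_def)
  have "length a \<le> length c2"
    using la prefix_length_le[OF p] by simp
  then have "prefix a c2 \<longleftrightarrow> prefix a c1" "prefix b c2 \<longleftrightarrow> prefix b c1"
    using t la l by (simp_all add: prefix_iff_take)
  moreover obtain zs where "c2 = c1 @ zs"
    using p by (auto simp: prefix_def)
  ultimately show ?thesis
    using la l unfolding swap_prefix_def by (auto simp: prefix_def)
qed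

lemma swap_prefix_prefix_iff:
  assumes l: "length a = length b" and la: "length a \<le> length c1"
  shows "prefix (swap_prefix a b c1) (swap_prefix a b c2) \<longleftrightarrow> prefix c1 c2"
proof
  assume "prefix (swap_prefix a b c1) (swap_prefix a b c2)"
  moreover have "length b \<le> length (swap_prefix a b c1)"
    using length_swap_prefix[OF l] la l by simp
  ultimately have "prefix (swap_prefix b a (swap_prefix a b c1)) (swap_prefix b a (swap_prefix a b c2))"
    using swap_prefix_mono[of b a] l by simp
  then show "prefix c1 c2"
    using swap_prefix_swap_prefix[OF l] by simp
qed (rule swap_prefix_mono[OF l la])

definition flip_last :: "bool list \<Rightarrow> bool list" where
  "flip_last c = butlast c @ [\<not> last c]"

lemma length_flip_last [simp]: "c \<noteq> [] \<Longrightarrow> length (flip_last c) = length c"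
  by (simp add: flip_last_def)

lemma flip_last_flip_last [simp]: "c \<noteq> [] \<Longrightarrow> flip_last (flip_last c) = c"
  by (simp add: flip_last_def)

lemma flip_last_neq: "c \<noteq> [] \<Longrightarrow> flip_last c \<noteq> c"
proof
  assume "c \<noteq> []" "flip_last c = c"
  then have "last (flip_last c) = last c"
    by simp
  then show False
    by (simp add: flip_last_def)
qed

lemma take_flip_last: "n < length c \<Longrightarrow> take n (flip_last c) = take n c"
  by (auto simp: flip_last_def butlast_conv_take min_def)

lemma prefix_flip_last_iff:
  assumes "length p + 1 = length c"
  shows "prefix p (flip_last c) \<longleftrightarrow> prefix p c"
proof -
  have "c \<noteq> []"
    using assms by auto
  then show ?thesis
    using assms take_flip_last[of "length p" c] by (simp add: prefix_iff_take)
qed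

definition label_at :: "nat list \<Rightarrow> bool list \<Rightarrow> bool list" where
  "label_at u h = snd (vert_of (u ! heap_idx h))"

definition swap_below :: "bool list \<Rightarrow> bool list \<Rightarrow> bool list \<Rightarrow> nat list \<Rightarrow> nat list" where
  "swap_below h a b u = map (\<lambda>i. if 1 \<le> i \<and> prefix h (heap_node i)
      then vert (fst (vert_of (u ! i))) (swap_prefix a b (snd (vert_of (u ! i)))) else u ! i) [0..<length u]"

lemma length_swap_below [simp]: "length (swap_below h a b u) = length u"
  by (simp add: swap_below_def)

lemma nth_swap_below: "i < length u \<Longrightarrow> swap_below h a b u ! i =
    (if 1 \<le> i \<and> prefix h (heap_node i)
     then vert (fst (vert_of (u ! i))) (swap_prefix a b (snd (vert_of (u ! i)))) else u ! i)"
  by (simp add: swap_below_def)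

lemma nth_swap_below_outside:
  "i < length u \<Longrightarrow> \<not> (1 \<le> i \<and> prefix h (heap_node i)) \<Longrightarrow> swap_below h a b u ! i = u ! i"
  unfolding nth_swap_below by (rule if_not_P)

definition consistent_upto :: "nat list \<Rightarrow> bool list \<Rightarrow> bool" where
  "consistent_upto u h \<longleftrightarrow> (\<forall>g x. prefix (g @ [x]) h \<longrightarrow> prefix (label_at u g) (label_at u (g @ [x])))"

lemma label_pot_label_at:
  "label_pot L {heap_idx g, heap_idx (g @ [x])} u =
     (if prefix (label_at u g) (label_at u (g @ [x])) then L else 0)"
  by (simp add: label_pot_tree_pair label_at_def)

lemma prefix_label_at_if_consistent_upto:
  "consistent_upto u h \<Longrightarrow> prefix g h \<Longrightarrow> prefix (label_at u g) (label_at u h)"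
proof (induction h rule: rev_induct)
  case (snoc x h)
  then have "consistent_upto u h" "prefix (label_at u h) (label_at u (h @ [x]))"
    unfolding consistent_upto_def by auto
  moreover from snoc(3) have "g = h @ [x] \<or> prefix g h"
    by simp
  ultimately show ?case
    using snoc(1) prefix_order.trans by blast
qed simp

section \<open>The support and its symmetries\<close>

lemma weight_pos: "weight I u > 0"
  by (simp add: weight_def)

locale hard_instance =
  fixes k :: nat and L :: real
  assumes k_ge_2: "k \<ge> 2" and L_nonneg: "L \<ge> 0"
begin

abbreviation "I \<equiv> hard_inst k L"

abbreviation "S \<equiv> support I"

lemma support_iff: "u \<in> S \<longleftrightarrow> length u = 2 ^ k \<and> (\<forall>i<2 ^ k. u ! i \<in> demand_vals i)"
  by (simp add: support_def)

lemma length_support: "u \<in> S \<Longrightarrow> length u = 2 ^ k"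
  by (simp add: support_iff)

lemma support_nth_0: "u \<in> S \<Longrightarrow> u ! 0 = 1"
proof -
  assume "u \<in> S"
  then have "u ! 0 \<in> demand_vals 0"
    by (simp add: support_iff)
  then show ?thesis
    by (simp add: demand_vals_def)
qed

lemma support_slot:
  assumes u: "u \<in> S" and h: "length h < k"
  shows "u ! heap_idx h = vert h (label_at u h)" "length (label_at u h) = length h + 1"
proof -
  have "u ! heap_idx h \<in> demand_vals (heap_idx h)"
    using u heap_idx_less[OF h] by (simp add: support_iff)
  then obtain c where "u ! heap_idx h = vert h c" "length c = length h + 1"
    using heap_idx_ge1[of h] unfolding demand_vals_def by auto
  then show "u ! heap_idx h = vert h (label_at u h)" "length (label_at u h) = length h + 1"
    by (auto simp: label_at_def)
qed

lemma set_support_subset: "u \<in> S \<Longrightarrow> set u \<subseteq> net_verts k"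
  using demand_vals_props(3) by (fastforce simp: support_iff in_set_conv_nth)

lemma finite_support: "finite S"
proof -
  have "S \<subseteq> {u. set u \<subseteq> net_verts k \<and> length u = 2 ^ k}"
    using set_support_subset length_support by auto
  then show ?thesis
    using finite_lists_length_eq[OF finite_net_verts] by (rule finite_subset)
qed

lemma swap_below_in_support:
  assumes u: "u \<in> S" and l: "length a = length b"
  shows "swap_below h a b u \<in> S"
  unfolding support_iff
proof (intro conjI allI impI)
  show "length (swap_below h a b u) = 2 ^ k"
    using u by (simp add: support_iff)
  fix i :: nat assume i: "i < 2 ^ k"
  show "swap_below h a b u ! i \<in> demand_vals i"
  proof (cases "1 \<le> i \<and> prefix h (heap_node i)")
    case True
    then have "length (heap_node i) < k"
      using length_heap_node_less i by simp
    then have "u ! i = vert (heap_node i) (label_at u (heap_node i))"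
      "length (label_at u (heap_node i)) = length (heap_node i) + 1"
      using support_slot[OF u \<open>length (heap_node i) < k\<close>] heap_idx_heap_node[of i] True by simp_all
    then show ?thesis
      using True i u length_swap_prefix[OF l]
      by (auto simp: nth_swap_below length_support demand_vals_def)
  next
    case False
    then show ?thesis
      using u i by (simp add: nth_swap_below_outside support_iff)
  qed
qed

lemma label_at_swap_below:
  assumes u: "u \<in> S" and g: "length g < k"
  shows "label_at (swap_below h a b u) g = (if prefix h g then swap_prefix a b (label_at u g) else label_at u g)"
  using heap_idx_ge1[of g] heap_idx_less[OF g] support_slot[OF u g]
  by (simp add: nth_swap_below label_at_def length_support[OF u])

lemma take_swap_below: "take (heap_idx h) (swap_below h a b u) = take (heap_idx h) u"
proof (rule nth_equalityI)
  fix i assume "i < length (take (heap_idx h) (swap_below h a b u))"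
  then have i: "i < heap_idx h" "i < length u"
    by auto
  have "\<not> (1 \<le> i \<and> prefix h (heap_node i))"
    using heap_idx_mono[of h "heap_node i"] heap_idx_heap_node[of i] i(1) by auto
  then have "swap_below h a b u ! i = u ! i"
    using i(2) by (simp add: nth_swap_below_outside)
  then show "take (heap_idx h) (swap_below h a b u) ! i = take (heap_idx h) u ! i"
    using i by simp
qed simp

lemma swap_below_swap_below:
  assumes u: "u \<in> S" and l: "length a = length b"
  shows "swap_below h b a (swap_below h a b u) = u"
proof (rule nth_equalityI)
  fix i assume "i < length (swap_below h b a (swap_below h a b u))"
  then have i: "i < length u"
    by simp
  show "swap_below h b a (swap_below h a b u) ! i = u ! i"
  proof (cases "1 \<le> i \<and> prefix h (heap_node i)")
    case True
    then have "length (heap_node i) < k"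
      using length_heap_node_less i u by (simp add: length_support)
    then have "u ! i = vert (heap_node i) (label_at u (heap_node i))"
      using support_slot(1)[OF u \<open>length (heap_node i) < k\<close>] heap_idx_heap_node[of i] True by simp
    then show ?thesis
      using True i swap_prefix_swap_prefix[OF l] by (simp add: nth_swap_below)
  qed (use i in \<open>simp add: nth_swap_below_outside\<close>)
qed simp

lemma label_pair_swap_below:
  assumes u: "u \<in> S" and l: "length a = length b" and la: "length a \<le> length h + 1"
    and g: "length g + 1 < k" and ne: "g @ [x] \<noteq> h"
  shows "prefix (label_at (swap_below h a b u) g) (label_at (swap_below h a b u) (g @ [x]))
     \<longleftrightarrow> prefix (label_at u g) (label_at u (g @ [x]))"
proof -
  have g1: "length g < k" and g2: "length (g @ [x]) < k"
    using g by auto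
  show ?thesis
  proof (cases "prefix h g")
    case True
    moreover have "length a \<le> length (label_at u g)"
      using support_slot(2)[OF u g1] la prefix_length_le[OF True] by simp
    ultimately show ?thesis
      using label_at_swap_below[OF u g1] label_at_swap_below[OF u g2] swap_prefix_prefix_iff[OF l]
      by simp
  next
    case False
    then have "\<not> prefix h (g @ [x])"
      using ne by simp
    then show ?thesis
      using False label_at_swap_below[OF u g1] label_at_swap_below[OF u g2] by simp
  qed
qed

definition potential :: "nat list \<Rightarrow> real" where
  "potential u = (\<Sum>e\<in>tree_pairs k. label_pot L e u)"

lemma weight_eq: "weight I u = exp (potential u)"
  by (simp add: weight_def potential_def)

definition consistent :: "nat list \<Rightarrow> bool" where
  "consistent u \<longleftrightarrow> (\<forall>g x. length g + 1 < k \<longrightarrow> prefix (label_at u g) (label_at u (g @ [x])))"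

lemma consistent_upto_if_consistent: "consistent u \<Longrightarrow> length h < k \<Longrightarrow> consistent_upto u h"
  unfolding consistent_def consistent_upto_def
  by (metis le_less_trans length_append_singleton prefix_length_le Suc_eq_plus1)

lemma potential_cong:
  assumes "\<And>g x. length g + 1 < k \<Longrightarrow>
    prefix (label_at v g) (label_at v (g @ [x])) \<longleftrightarrow> prefix (label_at u g) (label_at u (g @ [x]))"
  shows "potential v = potential u"
  unfolding potential_def
proof (rule sum.cong[OF refl])
  fix e assume "e \<in> tree_pairs k"
  then obtain g x where "e = {heap_idx g, heap_idx (g @ [x])}" "length g + 1 < k"
    unfolding tree_pairs_def by blast
  then show "label_pot L e v = label_pot L e u"
    using assms by (simp add: label_pot_label_at)
qed

text \<open>Flipping the last bit of the label at \<open>h\<close>, together with the labels of the whole subtree,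
  is an involution of the support preserving the MRF weight and the demands before \<open>h\<close>.\<close>

definition flip_at :: "bool list \<Rightarrow> nat list \<Rightarrow> nat list" where
  "flip_at h u = swap_below h (label_at u h) (flip_last (label_at u h)) u"

context
  fixes h :: "bool list" and u :: "nat list"
  assumes u: "u \<in> S" and h: "length h < k"
begin

lemma label_at_nonempty: "label_at u h \<noteq> []"
  using support_slot(2)[OF u h] by auto

lemma length_flip_last_label_at: "length (label_at u h) = length (flip_last (label_at u h))"
  using label_at_nonempty by simp

lemma flip_at_in_support: "flip_at h u \<in> S"
  unfolding flip_at_def using u length_flip_last_label_at by (rule swap_below_in_support)

lemma label_at_flip_at: "label_at (flip_at h u) h = flip_last (label_at u h)"
  unfolding flip_at_def using label_at_swap_below[OF u h] by (simp add: swap_prefix_def)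

lemma flip_at_flip_at: "flip_at h (flip_at h u) = u"
  unfolding flip_at_def[of h "flip_at h u"] label_at_flip_at flip_last_flip_last[OF label_at_nonempty]
  unfolding flip_at_def using u length_flip_last_label_at by (rule swap_below_swap_below)

lemma take_flip_at: "take (heap_idx h) (flip_at h u) = take (heap_idx h) u"
  unfolding flip_at_def by (rule take_swap_below)

lemma label_pair_flip_at:
  assumes g: "length g + 1 < k"
  shows "prefix (label_at (flip_at h u) g) (label_at (flip_at h u) (g @ [x]))
     \<longleftrightarrow> prefix (label_at u g) (label_at u (g @ [x]))"
proof (cases "g @ [x] = h")
  case True
  have g1: "length g < k"
    using g by simp
  have "\<not> prefix h g"
    using True by (auto dest: prefix_length_le)
  then have "label_at (flip_at h u) g = label_at u g"
    unfolding flip_at_def using label_at_swap_below[OF u g1] by simp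
  moreover have "length (label_at u g) + 1 = length (label_at u h)"
    using support_slot(2)[OF u g1] support_slot(2)[OF u h] True by auto
  ultimately show ?thesis
    using label_at_flip_at prefix_flip_last_iff True by simp
next
  case False
  then show ?thesis
    unfolding flip_at_def
    using label_pair_swap_below[OF u length_flip_last_label_at _ g False] support_slot(2)[OF u h]
    by simp
qed

lemma potential_flip_at: "potential (flip_at h u) = potential u"
  using label_pair_flip_at by (rule potential_cong)

lemma consistent_upto_flip_at: "consistent_upto (flip_at h u) h \<longleftrightarrow> consistent_upto u h"
proof -
  have "length g + 1 < k" if "prefix (g @ [x]) h" for g x
    using h prefix_length_le[OF that] by simp
  then show ?thesis
    unfolding consistent_upto_def using label_pair_flip_at by blast
qed

end

lemma weight_flip_at: "u \<in> S \<Longrightarrow> length h < k \<Longrightarrow> weight I (flip_at h u) = weight I u"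
  by (simp add: weight_eq potential_flip_at)

definition broken :: "bool list \<Rightarrow> bool \<Rightarrow> nat list \<Rightarrow> bool" where
  "broken g x u \<longleftrightarrow> \<not> prefix (label_at u g) (label_at u (g @ [x]))"

text \<open>Grafting the subtree of a broken child \<open>g @ [x]\<close> back below the label of its parent
  gains exactly \<open>L\<close> in potential; this bounds the mass of broken configurations.\<close>

definition repair :: "bool list \<Rightarrow> bool \<Rightarrow> nat list \<Rightarrow> nat list" where
  "repair g x u = swap_below (g @ [x]) (take (length g + 1) (label_at u (g @ [x]))) (label_at u g) u"

context
  fixes g :: "bool list" and x :: bool and u :: "nat list"
  assumes u: "u \<in> S" and g: "length g + 1 < k"
begin

lemma length_repair_labels:
  "length (take (length g + 1) (label_at u (g @ [x]))) = length (label_at u g)"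
  using support_slot(2)[OF u, of g] support_slot(2)[OF u, of "g @ [x]"] g by simp

lemma repair_in_support: "repair g x u \<in> S"
  unfolding repair_def using u length_repair_labels by (rule swap_below_in_support)

lemma label_at_repair_parent: "label_at (repair g x u) g = label_at u g"
  unfolding repair_def using label_at_swap_below[OF u, of g] g
  by (auto dest: prefix_length_le)

lemma repair_inverse:
  "swap_below (g @ [x]) (label_at (repair g x u) g) (take (length g + 1) (label_at u (g @ [x])))
     (repair g x u) = u"
  unfolding label_at_repair_parent unfolding repair_def
  using u length_repair_labels by (rule swap_below_swap_below)

lemma potential_repair:
  assumes "broken g x u"
  shows "potential (repair g x u) = potential u + L"
proof -
  let ?h = "g @ [x]" and ?e = "{heap_idx g, heap_idx (g @ [x])}"
  have "length ?h < k"
    using g by simp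
  have "prefix (take (length g + 1) (label_at u ?h)) (label_at u ?h)"
    by (rule take_is_prefix)
  then have "label_at (repair g x u) ?h = label_at u g @ drop (length g + 1) (label_at u ?h)"
    unfolding repair_def using label_at_swap_below[OF u \<open>length ?h < k\<close>] length_repair_labels
      support_slot(2)[OF u, of g] g by (simp add: swap_prefix_def)
  then have new: "label_pot L ?e (repair g x u) = L"
    by (simp add: label_pot_label_at label_at_repair_parent)
  have old: "label_pot L ?e u = 0"
    using assms by (simp add: label_pot_label_at broken_def)
  have rest: "label_pot L e (repair g x u) = label_pot L e u"
    if e_mem: "e \<in> tree_pairs k - {?e}" for e
  proof -
    obtain g' x' where e: "e = {heap_idx g', heap_idx (g' @ [x'])}" "length g' + 1 < k"
      using e_mem unfolding tree_pairs_def by blast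
    then have "g' @ [x'] \<noteq> ?h"
      using e_mem by auto
    then show ?thesis
      unfolding e(1) label_pot_label_at repair_def
      using label_pair_swap_below[OF u length_repair_labels _ e(2)] support_slot(2)[OF u, of g] g
      by simp
  qed
  have "?e \<in> tree_pairs k"
    using g unfolding tree_pairs_def by blast
  then have "potential v = label_pot L ?e v + (\<Sum>e\<in>tree_pairs k - {?e}. label_pot L e v)" for v
    unfolding potential_def by (rule sum.remove[OF finite_tree_pairs])
  moreover have "(\<Sum>e\<in>tree_pairs k - {?e}. label_pot L e (repair g x u)) =
      (\<Sum>e\<in>tree_pairs k - {?e}. label_pot L e u)"
    using rest by (rule sum.cong[OF refl])
  ultimately show ?thesis
    using new old by simp
qed

end

lemma weight_repair:
  assumes "u \<in> S" "length g + 1 < k" "broken g x u"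
  shows "weight I u = exp (- L) * weight I (repair g x u)"
  using potential_repair[OF assms] by (simp add: weight_eq exp_add[symmetric])

end

section \<open>Mass of the inconsistent configurations\<close>

lemma sum_union_bound:
  fixes w :: "'a \<Rightarrow> real"
  assumes "finite S" "finite P" "\<And>u. u \<in> S \<Longrightarrow> w u \<ge> 0"
  shows "(\<Sum>u\<in>{u\<in>S. \<exists>p\<in>P. Q p u}. w u) \<le> (\<Sum>p\<in>P. \<Sum>u\<in>{u\<in>S. Q p u}. w u)"
  using assms(2)
proof (induction P rule: finite_induct)
  case (insert q P)
  let ?A = "{u\<in>S. Q q u}" and ?B = "{u\<in>S. \<exists>p\<in>P. Q p u}"
  have "{u\<in>S. \<exists>p\<in>insert q P. Q p u} = ?A \<union> ?B"
    by auto
  then have "(\<Sum>u\<in>{u\<in>S. \<exists>p\<in>insert q P. Q p u}. w u) = sum w ?A + sum w ?B - sum w (?A \<inter> ?B)"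
    using assms(1) by (simp add: sum_Un)
  also have "\<dots> \<le> sum w ?A + sum w ?B"
    using assms(3) sum_nonneg[of "?A \<inter> ?B" w] by auto
  finally show ?case
    using insert by simp
qed simp

context hard_instance
begin

definition Z :: real where
  "Z = (\<Sum>u\<in>S. weight I u)"

definition all_false :: "nat list" where
  "all_false = map (\<lambda>i. if i = 0 then 1 else vert (heap_node i) (replicate (length (heap_node i) + 1) False))
     [0..<2 ^ k]"

lemma all_false_in_support: "all_false \<in> S"
  unfolding support_iff all_false_def by (auto simp: demand_vals_def)

lemma label_at_all_false: "length h < k \<Longrightarrow> label_at all_false h = replicate (length h + 1) False"
  using heap_idx_less[of h k] heap_idx_ge1[of h] by (simp add: label_at_def all_false_def)

lemma consistent_all_false: "consistent all_false"
  unfolding consistent_def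
proof (intro allI impI)
  fix g :: "bool list" and x assume "length g + 1 < k"
  then have "label_at all_false (g @ [x]) = label_at all_false g @ [False]"
    by (simp add: label_at_all_false replicate_append_same)
  then show "prefix (label_at all_false g) (label_at all_false (g @ [x]))"
    by simp
qed

lemma Z_pos: "Z > 0"
  unfolding Z_def using finite_support all_false_in_support weight_pos
  by (intro sum_pos) auto

text \<open>Fibres of \<open>repair g x\<close> are told apart by the discarded prefix of the child's label.\<close>

lemma broken_fibre_mass_le:
  assumes g: "length g + 1 < k"
  shows "(\<Sum>u\<in>{u\<in>S. broken g x u \<and> take (length g + 1) (label_at u (g @ [x])) = t}. weight I u)
    \<le> exp (- L) * Z"
    (is "sum _ ?A \<le> _")
proof -
  have "inj_on (repair g x) ?A"
  proof (rule inj_onI)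
    fix u1 u2 assume "u1 \<in> ?A" "u2 \<in> ?A" "repair g x u1 = repair g x u2"
    then show "u1 = u2"
      using repair_inverse[of u1 g x] repair_inverse[of u2 g x] g by auto
  qed
  moreover have "repair g x ` ?A \<subseteq> S"
    using repair_in_support g by auto
  ultimately have "(\<Sum>u\<in>?A. weight I (repair g x u)) \<le> Z"
    unfolding Z_def sum.reindex[symmetric, OF \<open>inj_on _ _\<close>, unfolded comp_def]
    using finite_support weight_pos by (intro sum_mono2) (auto intro: less_imp_le)
  moreover have "(\<Sum>u\<in>?A. weight I u) = (\<Sum>u\<in>?A. exp (- L) * weight I (repair g x u))"
    using weight_repair g by (intro sum.cong) auto
  then have "(\<Sum>u\<in>?A. weight I u) = exp (- L) * (\<Sum>u\<in>?A. weight I (repair g x u))"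
    by (simp add: sum_distrib_left)
  ultimately show ?thesis
    by simp
qed

lemma broken_mass_le:
  assumes g: "length g + 1 < k"
  shows "(\<Sum>u\<in>{u\<in>S. broken g x u}. weight I u) \<le> 2 ^ (length g + 1) * exp (- L) * Z"
proof -
  let ?T = "{t :: bool list. length t = length g + 1}"
  let ?p = "\<lambda>u. take (length g + 1) (label_at u (g @ [x]))"
  have "?p ` {u\<in>S. broken g x u} \<subseteq> ?T"
    using support_slot(2)[of _ "g @ [x]"] g by auto
  then have "(\<Sum>u\<in>{u\<in>S. broken g x u}. weight I u) =
      (\<Sum>t\<in>?T. \<Sum>u\<in>{u\<in>S. broken g x u \<and> ?p u = t}. weight I u)"
    using finite_support finite_lists_length_eq_bool
    by (subst sum.group[symmetric, where g = ?p]) (auto intro!: sum.cong)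
  also have "\<dots> \<le> (\<Sum>t\<in>?T. exp (- L) * Z)"
    using broken_fibre_mass_le[OF g] by (intro sum_mono) blast
  also have "\<dots> = 2 ^ (length g + 1) * exp (- L) * Z"
    by (simp add: card_lists_length_eq_bool)
  finally show ?thesis .
qed

definition bad_mass :: real where
  "bad_mass = (\<Sum>u\<in>{u\<in>S. \<not> consistent u}. weight I u)"

lemma bad_mass_le: "bad_mass \<le> 2 ^ (2 * k + 1) * exp (- L) * Z"
proof -
  let ?P = "{g :: bool list. length g + 1 < k} \<times> (UNIV :: bool set)"
  have "{u\<in>S. \<not> consistent u} = {u\<in>S. \<exists>p\<in>?P. broken (fst p) (snd p) u}"
    by (auto simp: consistent_def broken_def)
  moreover have "(\<Sum>u\<in>{u\<in>S. \<exists>p\<in>?P. broken (fst p) (snd p) u}. weight I u)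
      \<le> (\<Sum>p\<in>?P. \<Sum>u\<in>{u\<in>S. broken (fst p) (snd p) u}. weight I u)"
    using finite_support finite_card_parent_child_pairs(1)
    by (rule sum_union_bound) (simp add: weight_pos less_imp_le)
  ultimately have "bad_mass \<le> (\<Sum>p\<in>?P. \<Sum>u\<in>{u\<in>S. broken (fst p) (snd p) u}. weight I u)"
    unfolding bad_mass_def by simp
  also have "\<dots> \<le> (\<Sum>p\<in>?P. 2 ^ k * exp (- L) * Z)"
  proof (rule sum_mono)
    fix p assume "p \<in> ?P"
    then have g: "length (fst p) + 1 < k"
      by auto
    then have "2 ^ (length (fst p) + 1) * exp (- L) * Z \<le> 2 ^ k * exp (- L) * Z"
      using Z_pos by (intro mult_right_mono power_increasing) auto
    then show "(\<Sum>u\<in>{u\<in>S. broken (fst p) (snd p) u}. weight I u) \<le> 2 ^ k * exp (- L) * Z"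
      using broken_mass_le[OF g, of "snd p"] by linarith
  qed
  also have "\<dots> = real (card ?P) * (2 ^ k * exp (- L) * Z)"
    by (rule sum_constant)
  also have "\<dots> \<le> 2 ^ (k + 1) * (2 ^ k * exp (- L) * Z)"
  proof (rule mult_right_mono)
    have "real (card ?P) \<le> real ((2::nat) ^ (k + 1))"
      using finite_card_parent_child_pairs(2) by (simp only: of_nat_le_iff)
    then show "real (card ?P) \<le> 2 ^ (k + 1)"
      by simp
  qed (use Z_pos in simp)
  also have "\<dots> = 2 ^ (2 * k + 1) * exp (- L) * Z"
  proof -
    have "(2::real) ^ (k + 1) * 2 ^ k = 2 ^ (2 * k + 1)"
      by (simp only: power_add[symmetric]) (simp add: algebra_simps)
    then show ?thesis
      by (simp only: mult.assoc[symmetric])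
  qed
  finally show ?thesis .
qed

lemma consistent_mass_eq: "(\<Sum>u\<in>{u\<in>S. consistent u}. weight I u) = Z - bad_mass"
proof -
  have "Z = (\<Sum>u\<in>S. (if consistent u then weight I u else 0) + (if \<not> consistent u then weight I u else 0))"
    unfolding Z_def by (rule sum.cong) auto
  also have "\<dots> = (\<Sum>u\<in>{u\<in>S. consistent u}. weight I u) + bad_mass"
    unfolding bad_mass_def sum.inter_filter[OF finite_support] by (rule sum.distrib)
  finally show ?thesis
    by simp
qed

lemma consistent_upto_mass_ge:
  "length h < k \<Longrightarrow> Z - bad_mass \<le> (\<Sum>u\<in>{u\<in>S. consistent_upto u h}. weight I u)"
  unfolding consistent_mass_eq[symmetric] using finite_support consistent_upto_if_consistent weight_pos
  by (intro sum_mono2) (auto intro: less_imp_le)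

section \<open>The offline optimum\<close>

definition feasible_sets :: "nat list \<Rightarrow> nat set set set" where
  "feasible_sets u = {F. F \<subseteq> net_edges k \<and> connects F 0 (set u)}"

lemma opt_eq_Min: "opt I u = Min ((\<lambda>F. real (card F)) ` feasible_sets u)"
  by (simp add: opt_def feasible_sets_def)

lemma finite_feasible_sets: "finite (feasible_sets u)"
  by (rule finite_subset[OF _ finite_Pow_iff[THEN iffD2, OF finite_net_edges]])
     (auto simp: feasible_sets_def)

lemma opt_le_card: "F \<in> feasible_sets u \<Longrightarrow> opt I u \<le> real (card F)"
  unfolding opt_eq_Min using finite_feasible_sets by (intro Min_le) auto

lemma net_edges_feasible: "u \<in> S \<Longrightarrow> net_edges k \<in> feasible_sets u"
  using net_verts_connected[of k] set_support_subset k_ge_2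
  by (auto simp: feasible_sets_def connects_def)

lemma opt_le_4_pow: "u \<in> S \<Longrightarrow> opt I u \<le> 4 ^ k"
proof -
  assume "u \<in> S"
  then have "opt I u \<le> real (card (net_edges k))"
    by (intro opt_le_card net_edges_feasible)
  also have "\<dots> \<le> real (2 ^ (k - 1) * 2 ^ k * 2)"
    using card_net_edges by (simp only: of_nat_le_iff)
  also have "(2::nat) ^ (k - 1) * 2 ^ k * 2 = 4 ^ k"
  proof -
    have "(2::nat) ^ (k - 1) * 2 = 2 ^ k"
      using k_ge_2 by (cases k) auto
    then have "(2::nat) ^ (k - 1) * 2 ^ k * 2 = 2 ^ k * 2 ^ k"
      by (simp add: ac_simps)
    also have "\<dots> = 4 ^ k"
      by (simp add: power_mult_distrib[symmetric])
    finally show ?thesis .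
  qed
  finally show ?thesis
    by simp
qed

lemma opt_ge_1: "u \<in> S \<Longrightarrow> 1 \<le> opt I u"
proof -
  assume u: "u \<in> S"
  have "1 \<le> real (card F)" if F: "F \<in> feasible_sets u" for F
  proof -
    have "1 \<in> set u"
      using nth_mem[of 0 u] support_nth_0[OF u] length_support[OF u] by simp
    then have "(0, 1) \<in> (edge_rel F)\<^sup>*"
      using F by (auto simp: feasible_sets_def connects_def)
    then have "F \<noteq> {}"
      by (auto simp: edge_rel_def)
    moreover have "finite F"
      using F finite_net_edges by (auto simp: feasible_sets_def intro: finite_subset)
    ultimately show ?thesis
      by (simp add: Suc_leI card_gt_0_iff)
  qed
  moreover have "feasible_sets u \<noteq> {}"
    using net_edges_feasible[OF u] by blast
  ultimately show ?thesis
    unfolding opt_eq_Min using finite_feasible_sets by (subst Min_ge_iff) auto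
qed

lemma opt_le_2_pow_if_consistent:
  assumes u: "u \<in> S" and "consistent u"
  shows "opt I u \<le> 2 ^ k"
proof -
  have chain: "label_chain k (label_at u)"
    unfolding label_chain_def using support_slot(2)[OF u] assms(2) by (auto simp: consistent_def)
  have "k \<ge> 1"
    using k_ge_2 by simp
  have "(0, d) \<in> (edge_rel (label_tree k (label_at u)))\<^sup>*" if d: "d \<in> set u" for d
  proof -
    obtain i where "i < length u" "u ! i = d"
      using d by (auto simp: in_set_conv_nth)
    then have i: "i < 2 ^ k" "u ! i = d"
      using length_support[OF u] by simp_all
    show ?thesis
    proof (cases "i = 0")
      case True
      then have "d = nbr False [] (label_at u [])"
        using support_nth_0[OF u] i by (simp add: nbr_def)
      then show ?thesis
        using label_tree_connected(2)[OF chain] \<open>k \<ge> 1\<close> by simp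
    next
      case False
      then have "length (heap_node i) < k"
        using length_heap_node_less i by simp
      moreover have "d = vert (heap_node i) (label_at u (heap_node i))"
        using support_slot(1)[OF u calculation] heap_idx_heap_node[of i] False i by simp
      ultimately show ?thesis
        using label_tree_connected(1)[OF chain] by simp
    qed
  qed
  then have "label_tree k (label_at u) \<in> feasible_sets u"
    using label_tree_subset[OF chain \<open>k \<ge> 1\<close>] by (simp add: feasible_sets_def connects_def)
  then have "opt I u \<le> real (card (label_tree k (label_at u)))"
    by (rule opt_le_card)
  also have "\<dots> \<le> 2 ^ k"
    using card_label_tree[OF \<open>k \<ge> 1\<close>, of "label_at u"] by (metis of_nat_le_iff of_nat_numeral of_nat_power)
  finally show ?thesis .
qed

lemma expect_eq: "expect I f = (\<Sum>u\<in>S. weight I u * f u) / Z"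
  by (simp add: expect_def Z_def)

lemma expect_opt_ge_1: "1 \<le> expect I (opt I)"
proof -
  have "Z \<le> (\<Sum>u\<in>S. weight I u * opt I u)"
    unfolding Z_def
  proof (rule sum_mono)
    fix u assume "u \<in> S"
    then have "weight I u * 1 \<le> weight I u * opt I u"
      using opt_ge_1 weight_pos[of I u] by (intro mult_left_mono) auto
    then show "weight I u \<le> weight I u * opt I u"
      by simp
  qed
  then show ?thesis
    using Z_pos by (simp add: expect_eq)
qed

lemma expect_opt_le: "expect I (opt I) \<le> 2 ^ k + 4 ^ k * (bad_mass / Z)"
proof -
  have "(\<Sum>u\<in>S. weight I u * opt I u)
      \<le> (\<Sum>u\<in>S. 2 ^ k * weight I u + (if \<not> consistent u then 4 ^ k * weight I u else 0))"
  proof (rule sum_mono)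
    fix u assume u: "u \<in> S"
    have w: "0 \<le> weight I u"
      using weight_pos less_imp_le by blast
    show "weight I u * opt I u
        \<le> 2 ^ k * weight I u + (if \<not> consistent u then 4 ^ k * weight I u else 0)"
    proof (cases "consistent u")
      case True
      then show ?thesis
        using mult_left_mono[OF opt_le_2_pow_if_consistent[OF u True] w] by (simp add: mult.commute)
    next
      case False
      have "0 \<le> 2 ^ k * weight I u"
        using w by simp
      then show ?thesis
        using False mult_left_mono[OF opt_le_4_pow[OF u] w] by (simp add: mult.commute)
    qed
  qed
  also have "\<dots> = (\<Sum>u\<in>S. 2 ^ k * weight I u) + (\<Sum>u\<in>S. if \<not> consistent u then 4 ^ k * weight I u else 0)"
    by (rule sum.distrib)
  also have "\<dots> = 2 ^ k * Z + 4 ^ k * bad_mass"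
    unfolding Z_def bad_mass_def sum.inter_filter[OF finite_support, symmetric]
    by (simp add: sum_distrib_left)
  finally have "expect I (opt I) \<le> (2 ^ k * Z + 4 ^ k * bad_mass) / Z"
    unfolding expect_eq using Z_pos by (intro divide_right_mono) auto
  also have "\<dots> = 2 ^ k + 4 ^ k * (bad_mass / Z)"
    using Z_pos by (simp add: add_divide_distrib)
  finally show ?thesis .
qed

end

section \<open>The online cost\<close>

lemma alg_bought_0 [simp]: "alg_bought A u 0 = {}"
  by (simp add: alg_bought_def)

lemma alg_bought_mono: "t \<le> t' \<Longrightarrow> alg_bought A u t \<subseteq> alg_bought A u t'"
  unfolding alg_bought_def by (rule UN_mono) auto

lemma alg_bought_cong_take:
  assumes "take m u = take m v" "t \<le> m"
  shows "alg_bought A u t = alg_bought A v t"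
proof -
  have "take s u = take s v" if "s \<le> m" for s
  proof -
    have "take s u = take s (take m u)"
      using that by (simp add: min_def)
    also have "\<dots> = take s v"
      using that assms(1) by (simp add: min_def)
    finally show ?thesis .
  qed
  then show ?thesis
    using assms(2) unfolding alg_bought_def by (intro SUP_cong) auto
qed

lemma card_alg_bought_telescope:
  "finite (alg_bought A u N) \<Longrightarrow>
    (\<Sum>i<N. card (alg_bought A u (i + 1) - alg_bought A u i)) = card (alg_bought A u N)"
proof (induction N)
  case (Suc N)
  have sub: "alg_bought A u N \<subseteq> alg_bought A u (Suc N)"
    by (rule alg_bought_mono) simp
  have "finite (alg_bought A u N)"
    using sub Suc.prems by (rule finite_subset)
  moreover have "card (alg_bought A u (Suc N)) =
      card (alg_bought A u N) + card (alg_bought A u (Suc N) - alg_bought A u N)"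
    using card_Diff_subset[OF calculation sub] card_mono[OF Suc.prems sub] by simp
  ultimately show ?case
    using Suc.IH by simp
qed simp

lemma sum_pow_depth:
  "(\<Sum>h\<in>{h :: bool list. length h < k}. (2::real) ^ (k - length h - 1)) = real k * 2 ^ (k - 1)"
proof -
  have "(\<Sum>h\<in>{h :: bool list. length h < k}. (2::real) ^ (k - length h - 1))
      = (\<Sum>j<k. \<Sum>h\<in>{h :: bool list. length h < k \<and> length h = j}. (2::real) ^ (k - length h - 1))"
    by (subst sum.group[symmetric, where g = length])
       (auto simp: finite_lists_shorter_bool intro!: sum.cong)
  also have "\<dots> = (\<Sum>j<k. (2::real) ^ (k - 1))"
  proof (rule sum.cong[OF refl])
    fix j assume "j \<in> {..<k}"
    then have "{h :: bool list. length h < k \<and> length h = j} = {h. length h = j}"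
      by auto
    then have "(\<Sum>h\<in>{h :: bool list. length h < k \<and> length h = j}. (2::real) ^ (k - length h - 1))
        = 2 ^ j * 2 ^ (k - j - 1)"
      by (simp add: card_lists_length_eq_bool)
    also have "\<dots> = 2 ^ (k - 1)"
      using \<open>j \<in> {..<k}\<close> by (simp flip: power_add)
    finally show "(\<Sum>h\<in>{h :: bool list. length h < k \<and> length h = j}. (2::real) ^ (k - length h - 1))
        = 2 ^ (k - 1)" .
  qed
  finally show ?thesis
    by simp
qed

context hard_instance
begin

lemma alg_bought_subset:
  assumes "online_alg I A" "u \<in> S" "t \<le> 2 ^ k"
  shows "alg_bought A u t \<subseteq> net_edges k"
  using assms by (cases "t = 0") (auto simp: online_alg_def)

lemma finite_alg_bought:
  "online_alg I A \<Longrightarrow> u \<in> S \<Longrightarrow> t \<le> 2 ^ k \<Longrightarrow> finite (alg_bought A u t)"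
  using alg_bought_subset finite_net_edges by (rule finite_subset)

text \<open>When the demand at node \<open>h\<close> arrives, the algorithm needs \<open>2 ^ (k - length h - 1)\<close> edges
  in the region of its label. Those bought earlier were bought without knowing the last bit of
  that label, so under the weight-preserving involution \<open>flip_at h\<close> they count as edges wasted
  in the region of the other label.\<close>

definition fresh_edges :: "(nat list \<Rightarrow> nat set set) \<Rightarrow> bool list \<Rightarrow> nat list \<Rightarrow> nat" where
  "fresh_edges A h u = card ((alg_bought A u (heap_idx h + 1) - alg_bought A u (heap_idx h))
     \<inter> region_edges k h (label_at u h))"

definition wasted_edges :: "(nat list \<Rightarrow> nat set set) \<Rightarrow> bool list \<Rightarrow> nat list \<Rightarrow> nat" where
  "wasted_edges A h u = card (alg_bought A u (2 ^ k) \<inter> region_edges k h (flip_last (label_at u h)))"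

context
  fixes A u
  assumes A: "online_alg I A" and u: "u \<in> S"
begin

lemma region_edges_needed:
  assumes h: "length h < k"
  shows "2 ^ (k - length h - 1)
    \<le> fresh_edges A h u + card (alg_bought A u (heap_idx h) \<inter> region_edges k h (label_at u h))"
proof -
  let ?B = "alg_bought A u" and ?R = "region_edges k h (label_at u h)"
  have ik: "heap_idx h + 1 \<le> 2 ^ k"
    using heap_idx_less[OF h] by simp
  have "connects (?B (heap_idx h + 1)) 0 (set (take (heap_idx h + 1) u))"
    using A u ik unfolding online_alg_def by auto
  moreover have "u ! heap_idx h \<in> set (take (heap_idx h + 1) u)"
    using ik length_support[OF u] by (auto simp: in_set_conv_nth intro!: exI[of _ "heap_idx h"])
  ultimately have "(0, vert h (label_at u h)) \<in> (edge_rel (?B (heap_idx h + 1)))\<^sup>*"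
    unfolding connects_def using support_slot(1)[OF u h] by auto
  then have "2 ^ (k - length h - 1) \<le> card (?B (heap_idx h + 1) \<inter> ?R)"
    using card_region_edges_ge[OF alg_bought_subset[OF A u ik] _ h support_slot(2)[OF u h]] by simp
  also have "\<dots> \<le> card ((?B (heap_idx h + 1) - ?B (heap_idx h)) \<inter> ?R \<union> ?B (heap_idx h) \<inter> ?R)"
    using finite_alg_bought[OF A u ik] finite_alg_bought[OF A u, of "heap_idx h"] ik
    by (intro card_mono) auto
  also have "\<dots> \<le> fresh_edges A h u + card (?B (heap_idx h) \<inter> ?R)"
    unfolding fresh_edges_def by (rule card_Un_le)
  finally show ?thesis .
qed

lemma early_edges_wasted:
  assumes h: "length h < k"
  shows "card (alg_bought A u (heap_idx h) \<inter> region_edges k h (label_at u h))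
    \<le> wasted_edges A h (flip_at h u)"
proof -
  have "alg_bought A u (heap_idx h) = alg_bought A (flip_at h u) (heap_idx h)"
    using take_flip_at[OF u h] by (intro alg_bought_cong_take) auto
  also have "\<dots> \<subseteq> alg_bought A (flip_at h u) (2 ^ k)"
    using heap_idx_less[OF h] by (intro alg_bought_mono) simp
  finally show ?thesis
    unfolding wasted_edges_def label_at_flip_at[OF u h] flip_last_flip_last[OF label_at_nonempty[OF u h]]
    using finite_alg_bought[OF A flip_at_in_support[OF u h]] by (intro card_mono) auto
qed

lemma sum_fresh_edges_le:
  "(\<Sum>h\<in>{h. length h < k}. fresh_edges A h u) \<le> card (alg_bought A u (2 ^ k))"
proof -
  let ?d = "\<lambda>i. card (alg_bought A u (i + 1) - alg_bought A u i)"
  have "(\<Sum>h\<in>{h. length h < k}. fresh_edges A h u) \<le> (\<Sum>h\<in>{h. length h < k}. ?d (heap_idx h))"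
  proof (rule sum_mono)
    fix h :: "bool list" assume "h \<in> {h. length h < k}"
    then have "finite (alg_bought A u (heap_idx h + 1))"
      using finite_alg_bought[OF A u] heap_idx_less by (simp add: Suc_leI)
    then show "fresh_edges A h u \<le> ?d (heap_idx h)"
      unfolding fresh_edges_def by (intro card_mono) auto
  qed
  also have "\<dots> = (\<Sum>i\<in>heap_idx ` {h. length h < k}. ?d i)"
    by (rule sum.reindex_cong[where l = heap_idx, OF _ refl refl, symmetric]) (auto intro: inj_onI)
  also have "\<dots> \<le> (\<Sum>i<2 ^ k. ?d i)"
    using heap_idx_less by (intro sum_mono2) auto
  also have "\<dots> = card (alg_bought A u (2 ^ k))"
    using finite_alg_bought[OF A u] by (intro card_alg_bought_telescope) simp
  finally show ?thesis .
qed

text \<open>Along a consistent branch the labels form a chain, so the regions of the flipped labels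
  are pairwise disjoint.\<close>

lemma wasted_regions_disjoint:
  assumes h2: "length h2 < k" "consistent_upto u h2" and "prefix h1 h2" "h1 \<noteq> h2"
  shows "region_edges k h1 (flip_last (label_at u h1)) \<inter> region_edges k h2 (flip_last (label_at u h2)) = {}"
proof (rule ccontr)
  let ?c1 = "label_at u h1" and ?c2 = "label_at u h2"
  have l12: "length h1 < length h2"
    using assms(3,4) by (auto simp: prefix_def)
  then have h1: "length h1 < k"
    using h2 by simp
  have c1: "length (flip_last ?c1) = length h1 + 1"
    using support_slot(2)[OF u h1] label_at_nonempty[OF u h1] by simp
  have c2: "length (flip_last ?c2) = length h2 + 1" "length ?c2 = length h2 + 1"
    using support_slot(2)[OF u h2(1)] label_at_nonempty[OF u h2(1)] by simp_all
  assume "region_edges k h1 (flip_last ?c1) \<inter> region_edges k h2 (flip_last ?c2) \<noteq> {}"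
  then obtain X where "X \<in> region_edges k h1 (flip_last ?c1)" "X \<in> region_edges k h2 (flip_last ?c2)"
    by blast
  then have "prefix (flip_last ?c1) (flip_last ?c2) \<or> prefix (flip_last ?c2) (flip_last ?c1)"
    by (rule region_edges_comparable[THEN conjunct2])
  then have "prefix (flip_last ?c1) (flip_last ?c2)"
    using prefix_length_le[of "flip_last ?c2" "flip_last ?c1"] c1 c2 l12 by auto
  then have "flip_last ?c1 = take (length h1 + 1) (flip_last ?c2)"
    using c1 prefix_iff_take[of "flip_last ?c1"] by simp
  also have "\<dots> = take (length h1 + 1) ?c2"
    using c2(2) l12 by (intro take_flip_last) simp
  also have "\<dots> = ?c1"
    using prefix_label_at_if_consistent_upto[OF h2(2) assms(3)] support_slot(2)[OF u h1]
      prefix_iff_take[of ?c1] by simp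
  finally have "flip_last ?c1 = ?c1" .
  with flip_last_neq[OF label_at_nonempty[OF u h1]] show False
    by contradiction
qed

lemma sum_wasted_edges_le:
  "(\<Sum>h\<in>{h. length h < k \<and> consistent_upto u h}. wasted_edges A h u) \<le> card (alg_bought A u (2 ^ k))"
proof -
  let ?H = "{h. length h < k \<and> consistent_upto u h}"
  let ?W = "\<lambda>h. alg_bought A u (2 ^ k) \<inter> region_edges k h (flip_last (label_at u h))"
  have fin: "finite (alg_bought A u (2 ^ k))"
    using finite_alg_bought[OF A u] by simp
  have "finite ?H"
    by (rule finite_subset[OF _ finite_lists_shorter_bool[of k]]) auto
  moreover have "?W h1 \<inter> ?W h2 = {}" if "h1 \<in> ?H" "h2 \<in> ?H" "h1 \<noteq> h2" for h1 h2
  proof (cases "prefix h1 h2 \<or> prefix h2 h1")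
    case True
    then show ?thesis
    proof
      assume "prefix h1 h2"
      then show ?thesis
        using wasted_regions_disjoint[of h2 h1] that by auto
    next
      assume "prefix h2 h1"
      then show ?thesis
        using wasted_regions_disjoint[of h1 h2] that by auto
    qed
  next
    case False
    then show ?thesis
      using region_edges_comparable[THEN conjunct1, of _ k h1 _ h2] by auto
  qed
  ultimately have "(\<Sum>h\<in>?H. wasted_edges A h u) = card (\<Union>h\<in>?H. ?W h)"
    unfolding wasted_edges_def using fin by (intro card_UN_disjoint[symmetric]) auto
  also have "\<dots> \<le> card (alg_bought A u (2 ^ k))"
    using fin by (intro card_mono) auto
  finally show ?thesis .
qed

end

lemma region_charge:
  assumes A: "online_alg I A" and h: "length h < k"
  shows "2 ^ (k - length h - 1) * (\<Sum>u\<in>{u\<in>S. consistent_upto u h}. weight I u)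
    \<le> (\<Sum>u\<in>S. weight I u * (real (fresh_edges A h u)
          + (if consistent_upto u h then real (wasted_edges A h u) else 0)))"
proof -
  let ?C = "{u\<in>S. consistent_upto u h}"
  have w: "0 \<le> weight I u" for u
    using weight_pos less_imp_le by blast
  have flip: "(\<Sum>u\<in>?C. weight I u * real (wasted_edges A h (flip_at h u)))
      = (\<Sum>u\<in>?C. weight I u * real (wasted_edges A h u))"
    by (rule sum.reindex_bij_witness[where i = "flip_at h" and j = "flip_at h"])
       (auto simp: h flip_at_flip_at flip_at_in_support consistent_upto_flip_at weight_flip_at)
  have "2 ^ (k - length h - 1) * (\<Sum>u\<in>?C. weight I u) = (\<Sum>u\<in>?C. weight I u * 2 ^ (k - length h - 1))"
    by (simp add: sum_distrib_left mult.commute)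
  also have "\<dots> \<le> (\<Sum>u\<in>?C. weight I u *
      (real (fresh_edges A h u) + real (wasted_edges A h (flip_at h u))))"
  proof (rule sum_mono, rule mult_left_mono[OF _ w])
    fix u assume "u \<in> ?C"
    then have "2 ^ (k - length h - 1) \<le> fresh_edges A h u + wasted_edges A h (flip_at h u)"
      using region_edges_needed[OF A _ h, of u] early_edges_wasted[OF A _ h, of u] by fastforce
    then show "2 ^ (k - length h - 1) \<le> real (fresh_edges A h u) + real (wasted_edges A h (flip_at h u))"
      by (metis of_nat_add of_nat_le_iff of_nat_numeral of_nat_power)
  qed
  also have "\<dots> = (\<Sum>u\<in>?C. weight I u * real (fresh_edges A h u))
      + (\<Sum>u\<in>?C. weight I u * real (wasted_edges A h u))"
    by (simp add: distrib_left sum.distrib flip)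
  also have "\<dots> \<le> (\<Sum>u\<in>S. weight I u * real (fresh_edges A h u))
      + (\<Sum>u\<in>S. if consistent_upto u h then weight I u * real (wasted_edges A h u) else 0)"
    using finite_support w by (intro add_mono sum_mono2) (auto simp: sum.inter_filter)
  also have "\<dots> = (\<Sum>u\<in>S. weight I u * (real (fresh_edges A h u)
          + (if consistent_upto u h then real (wasted_edges A h u) else 0)))"
    unfolding sum.distrib[symmetric] by (rule sum.cong) (auto simp: distrib_left)
  finally show ?thesis .
qed

lemma alg_cost_charge:
  assumes A: "online_alg I A" and u: "u \<in> S"
  shows "(\<Sum>h\<in>{h. length h < k}. real (fresh_edges A h u)
      + (if consistent_upto u h then real (wasted_edges A h u) else 0)) \<le> 2 * alg_cost I A u"
proof -
  have "(\<Sum>h\<in>{h. length h < k}. if consistent_upto u h then real (wasted_edges A h u) else 0)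
      = (\<Sum>h\<in>{h. length h < k \<and> consistent_upto u h}. real (wasted_edges A h u))"
    using finite_lists_shorter_bool by (simp add: sum.inter_filter[symmetric] conj_commute)
  also have "\<dots> \<le> real (card (alg_bought A u (2 ^ k)))"
    using sum_wasted_edges_le[OF A u] by (metis of_nat_le_iff of_nat_sum)
  finally have "(\<Sum>h\<in>{h. length h < k}. if consistent_upto u h then real (wasted_edges A h u) else 0)
      \<le> real (card (alg_bought A u (2 ^ k)))" .
  moreover have "(\<Sum>h\<in>{h. length h < k}. real (fresh_edges A h u)) \<le> real (card (alg_bought A u (2 ^ k)))"
    using sum_fresh_edges_le[OF A u] by (metis of_nat_le_iff of_nat_sum)
  ultimately show ?thesis
    by (simp add: sum.distrib alg_cost_def)
qed

lemma expect_alg_ge: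
  assumes A: "online_alg I A"
  shows "real k * 2 ^ (k - 1) / 2 * (1 - bad_mass / Z) \<le> expect I (alg_cost I A)"
proof -
  let ?H = "{h :: bool list. length h < k}"
  let ?G = "\<lambda>h u. real (fresh_edges A h u) + (if consistent_upto u h then real (wasted_edges A h u) else 0)"
  have w: "0 \<le> weight I u" for u
    using weight_pos less_imp_le by blast
  have "real k * 2 ^ (k - 1) * (Z - bad_mass) = (\<Sum>h\<in>?H. 2 ^ (k - length h - 1) * (Z - bad_mass))"
    unfolding sum_distrib_right[symmetric] sum_pow_depth ..
  also have "\<dots> \<le> (\<Sum>h\<in>?H. 2 ^ (k - length h - 1) * (\<Sum>u\<in>{u\<in>S. consistent_upto u h}. weight I u))"
    using consistent_upto_mass_ge by (intro sum_mono mult_left_mono) auto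
  also have "\<dots> \<le> (\<Sum>h\<in>?H. \<Sum>u\<in>S. weight I u * ?G h u)"
    using region_charge[OF A] by (intro sum_mono) auto
  also have "\<dots> = (\<Sum>u\<in>S. weight I u * (\<Sum>h\<in>?H. ?G h u))"
    by (simp add: sum.swap[of _ ?H] sum_distrib_left)
  also have "\<dots> \<le> (\<Sum>u\<in>S. weight I u * (2 * alg_cost I A u))"
    using alg_cost_charge[OF A] w by (intro sum_mono mult_left_mono) auto
  also have "\<dots> = 2 * (Z * expect I (alg_cost I A))"
  proof -
    have "Z * expect I (alg_cost I A) = (\<Sum>u\<in>S. weight I u * alg_cost I A u)"
      using Z_pos by (simp add: expect_eq)
    then show ?thesis
      by (simp add: sum_distrib_left mult.left_commute)
  qed
  finally have "real k * 2 ^ (k - 1) * (Z - bad_mass) \<le> 2 * (Z * expect I (alg_cost I A))" .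
  then show ?thesis
    using Z_pos by (simp add: field_simps)
qed

end

section \<open>Degree and competitive ratio\<close>

lemma exp_ge_pow2: "2 ^ n \<le> exp (real n)"
proof -
  have "(2::real) ^ n \<le> exp 1 ^ n"
    using exp_ge_add_one_self[of 1] by (intro power_mono) simp_all
  also have "\<dots> = exp (real n)"
    by (simp add: exp_of_nat_mult[symmetric])
  finally show ?thesis .
qed

context hard_instance
begin

lemma mrf_delta_eq:
  "mrf_delta I = Max ((\<lambda>(i, u). \<bar>\<Sum>e\<in>{e\<in>tree_pairs k. i \<in> e}. label_pot L e u\<bar>) ` ({..<2 ^ k} \<times> S))"
  by (simp add: mrf_delta_def)

lemma mrf_delta_le: "mrf_delta I \<le> 3 * L"
proof -
  have "\<bar>\<Sum>e\<in>{e\<in>tree_pairs k. i \<in> e}. label_pot L e u\<bar> \<le> 3 * L" for i u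
  proof -
    let ?E = "{e\<in>tree_pairs k. i \<in> e}"
    have "card ?E \<le> card {{i div 2, i}, {i, 2 * i}, {i, 2 * i + 1}}"
      using tree_pairs_containing by (intro card_mono) auto
    also have "\<dots> \<le> 3"
      by (simp add: card_insert_le_m1)
    finally have "real (card ?E) * L \<le> 3 * L"
      using L_nonneg by (intro mult_right_mono) auto
    moreover have "0 \<le> (\<Sum>e\<in>?E. label_pot L e u)" "(\<Sum>e\<in>?E. label_pot L e u) \<le> real (card ?E) * L"
      using L_nonneg by (auto intro: sum_nonneg sum_bounded_above simp: label_pot_def)
    ultimately show ?thesis
      by simp
  qed
  moreover have "(0, all_false) \<in> {..<(2::nat) ^ k} \<times> S"
    using all_false_in_support by simp
  then have "{..<(2::nat) ^ k} \<times> S \<noteq> {}"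
    by blast
  ultimately show ?thesis
    unfolding mrf_delta_eq using finite_support by (subst Max_le_iff) auto
qed

text \<open>The lower bound is attained at demand \<open>2\<close> (the node \<open>[False]\<close>) when all labels are
  \<open>False\<close>-strings, where the tree pair \<open>{1, 2}\<close> is rewarded.\<close>

lemma mrf_delta_ge: "L \<le> mrf_delta I"
proof -
  have e: "{heap_idx [], heap_idx [False]} = {1, 2::nat}"
    by (simp add: heap_idx_def numeral_2_eq_2)
  have "{1, 2} \<in> tree_pairs k"
    using k_ge_2 e[symmetric] unfolding tree_pairs_def by force
  moreover have "length ([] :: bool list) + 1 < k"
    using k_ge_2 by simp
  then have "prefix (label_at all_false []) (label_at all_false [False])"
    using consistent_all_false unfolding consistent_def by fastforce
  then have "label_pot L {1, 2} all_false = L"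
    using label_pot_label_at[of L "[]" False all_false, unfolded append_Nil e] by simp
  ultimately have "L \<le> (\<Sum>e\<in>{e\<in>tree_pairs k. 2 \<in> e}. label_pot L e all_false)"
    using finite_tree_pairs L_nonneg
    by (intro member_le_sum[of "{1, 2}", THEN order_trans[rotated]]) (auto simp: label_pot_def)
  moreover have "(2::nat) < 2 ^ k"
    using power_strict_increasing[of 1 k "2::nat"] k_ge_2 by simp
  then have "(2, all_false) \<in> {..<(2::nat) ^ k} \<times> S"
    using all_false_in_support by simp
  ultimately show ?thesis
    unfolding mrf_delta_eq using finite_support by (intro Max_ge_iff[THEN iffD2]) force+
qed

end

locale calibrated_instance = hard_instance +
  assumes L_eq: "L = 3 * real k + 1"
begin

lemma bad_fraction_le: "bad_mass / Z \<le> 1 / 2 ^ k"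
proof -
  have "3 * k + 1 = (2 * k + 1) + k"
    by simp
  then have "(2::real) ^ (2 * k + 1) * 2 ^ k \<le> exp L"
    using exp_ge_pow2[of "3 * k + 1"] L_eq by (simp only: power_add[symmetric]) (simp add: ac_simps)
  then have "2 ^ (2 * k + 1) * exp (- L) \<le> 1 / 2 ^ k"
    by (simp add: exp_minus field_simps)
  then have "bad_mass \<le> 1 / 2 ^ k * Z"
    using bad_mass_le Z_pos by (meson less_imp_le mult_right_mono order_trans)
  then show ?thesis
    using Z_pos by (simp add: divide_le_eq)
qed

lemma expect_opt_le_2_pow: "expect I (opt I) \<le> 2 * 2 ^ k"
proof -
  have "4 ^ k * (bad_mass / Z) \<le> 4 ^ k * (1 / 2 ^ k)"
    using bad_fraction_le by (rule mult_left_mono) simp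
  also have "\<dots> = 2 ^ k"
  proof -
    have "(4::real) ^ k = 2 ^ k * 2 ^ k"
      by (simp flip: power_mult_distrib)
    then show ?thesis
      by simp
  qed
  finally show ?thesis
    using expect_opt_le by linarith
qed

lemma expect_alg_ge_k_pow:
  assumes "online_alg I A"
  shows "real k * 2 ^ k / 8 \<le> expect I (alg_cost I A)"
proof -
  have "(1::real) / 2 ^ k \<le> 1 / 2"
    using k_ge_2 power_increasing[of 1 k "2::real"] by (simp add: frac_le)
  then have "1 / 2 \<le> 1 - bad_mass / Z"
    using bad_fraction_le by linarith
  have "k = Suc (k - 1)"
    using k_ge_2 by simp
  then have "(2::real) ^ k = 2 * 2 ^ (k - 1)"
    by (metis power_Suc)
  then have "real k * 2 ^ k / 8 = real k * 2 ^ (k - 1) / 2 * (1 / 2)"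
    by simp
  also have "\<dots> \<le> real k * 2 ^ (k - 1) / 2 * (1 - bad_mass / Z)"
    using \<open>1 / 2 \<le> 1 - bad_mass / Z\<close> by (intro mult_left_mono) auto
  finally have "real k * 2 ^ k / 8 \<le> real k * 2 ^ (k - 1) / 2 * (1 - bad_mass / Z)" .
  then show ?thesis
    using expect_alg_ge[OF assms] by linarith
qed

lemma not_competitive:
  assumes "online_alg I A" and \<alpha>: "\<alpha> < real k / 16"
  shows "\<not> competitive I A \<alpha>"
proof
  assume "competitive I A \<alpha>"
  then have "expect I (alg_cost I A) \<le> \<alpha> * expect I (opt I)"
    by (simp add: competitive_def)
  also have "\<dots> < real k / 16 * expect I (opt I)"
    using \<alpha> expect_opt_ge_1 by (intro mult_strict_right_mono) auto
  also have "\<dots> \<le> real k / 16 * (2 * 2 ^ k)"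
    using expect_opt_le_2_pow by (intro mult_left_mono) auto
  finally show False
    using expect_alg_ge_k_pow[OF assms(1)] by simp
qed

end

theorem corollary5p5:
  shows "\<exists>c>0. \<forall>D::real. \<exists>I. instance_ok I \<and> mrf_delta I \<ge> D \<and>
           (\<forall>A. online_alg I A \<longrightarrow> (\<forall>\<alpha>. \<alpha> < c * mrf_delta I \<longrightarrow> \<not> competitive I A \<alpha>))"
proof (intro exI[of _ "1 / 176"] conjI allI)
  fix D :: real
  define k where "k = max 2 (nat \<lceil>D\<rceil>)"
  define L where "L = 3 * real k + 1"
  interpret calibrated_instance k L
    by unfold_locales (simp_all add: k_def L_def)
  have "D \<le> real k"
    unfolding k_def by linarith
  show "\<exists>I. instance_ok I \<and> mrf_delta I \<ge> D \<and>
      (\<forall>A. online_alg I A \<longrightarrow> (\<forall>\<alpha>. \<alpha> < 1 / 176 * mrf_delta I \<longrightarrow> \<not> competitive I A \<alpha>))"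
  proof (intro exI[of _ "hard_inst k L"] conjI allI impI)
    show "instance_ok (hard_inst k L)"
      using k_ge_2 by (intro hard_inst_ok) simp
    show "D \<le> mrf_delta (hard_inst k L)"
      using \<open>D \<le> real k\<close> mrf_delta_ge by (simp add: L_def)
    fix A \<alpha> assume "online_alg (hard_inst k L) A" "\<alpha> < 1 / 176 * mrf_delta (hard_inst k L)"
    moreover have "1 / 176 * mrf_delta (hard_inst k L) \<le> real k / 16"
      \<comment> \<open>since \<open>\<Delta> \<le> 3 L = 9 k + 3 \<le> 11 k\<close>\<close>
      using mrf_delta_le k_ge_2 by (simp add: L_def)
    ultimately show "\<not> competitive (hard_inst k L) A \<alpha>"
      using not_competitive by simp
  qed
qed simp

end
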